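(* Let $r,K,\mu$ satisfy Assumption 1, $a>0$ and $c\in\mathbb R$. If $(w,m)\in C^0([-a,a])^2$ is a solution of the localized problem (P$_a$), then $w(x)>0$ and $m(x)>0$ for all $x\in[-a,a)$.
   Context: Assumption 1: $r\in(1,\infty)$, $\mu\in\left(0,\min\left(\frac r2,1-\frac1r,1-K,K\right)\right)$, $K\in\left(0,\min\left(1,\frac{r}{r-1}\left(1-\frac{\mu}{1-\mu}\right)\right)\right)$. $f_w(w,m):=w(1-(w+m))+\mu(m-w)$, $f_m(w,m):=rm\left(1-\frac{w+m}{K}\right)+\mu(w-m)$; $(w^*,m^* )$ is the unique solution in $(0,1)\times(0,K)$ of $f_w=f_m=0$. The localized problem (P$_a$) for given $a>0$, $c\in\mathbb R$: $w,m\in C^0([-a,a])$ satisfy, in the weak (distributional) sense on $(-a,a)$, $-cw'-w''=f_w(w,m)\chi_{w\ge0}\chi_{m\ge0}$, $-cm'-m''=f_m(w,m)\chi_{w\ge0}\chi_{m\ge0}$, with boundary conditions $w(-a)=w^*$, $m(-a)=m^*$, $w(a)=m(a)=0$; here $\chi_{w\ge0}$ denotes the indicator of the set where $w\ge0$. *)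

theory Defs
  imports "HOL-Analysis.Analysis"
begin

definition assumption1 :: "real \<Rightarrow> real \<Rightarrow> real \<Rightarrow> bool" where
  "assumption1 r K \<mu> \<longleftrightarrow>
     1 < r \<and>
     0 < \<mu> \<and> \<mu> < min (min (r / 2) (1 - 1 / r)) (min (1 - K) K) \<and>
     0 < K \<and> K < min 1 (r / (r - 1) * (1 - \<mu> / (1 - \<mu>)))"

definition fw :: "real \<Rightarrow> real \<Rightarrow> real \<Rightarrow> real" where
  "fw \<mu> w m = w * (1 - (w + m)) + \<mu> * (m - w)"

definition fm :: "real \<Rightarrow> real \<Rightarrow> real \<Rightarrow> real \<Rightarrow> real \<Rightarrow> real" where
  "fm r K \<mu> w m = r * m * (1 - (w + m) / K) + \<mu> * (w - m)"

definition eqpt :: "real \<Rightarrow> real \<Rightarrow> real \<Rightarrow> real \<times> real" where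
  "eqpt r K \<mu> = (THE p. fst p \<in> {0<..<1} \<and> snd p \<in> {0<..<K} \<and>
                      fw \<mu> (fst p) (snd p) = 0 \<and> fm r K \<mu> (fst p) (snd p) = 0)"

definition test_fun :: "real \<Rightarrow> (real \<Rightarrow> real) \<Rightarrow> bool" where
  "test_fun a \<phi> \<longleftrightarrow> (\<forall>n. \<forall>x. ((deriv ^^ n) \<phi>) differentiable (at x)) \<and>
     (\<exists>\<epsilon>>0. \<forall>x. a - \<epsilon> \<le> \<bar>x\<bar> \<longrightarrow> \<phi> x = 0)"

text \<open>Weak (distributional) form of  -c u' - u'' = F  on (-a,a):
  integral of (c u phi' - u phi'') equals integral of F phi for every test function phi.\<close>
definition weak_sol :: "real \<Rightarrow> real \<Rightarrow> (real \<Rightarrow> real) \<Rightarrow> (real \<Rightarrow> real) \<Rightarrow> bool" where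
  "weak_sol a c u F \<longleftrightarrow> (\<forall>\<phi>. test_fun a \<phi> \<longrightarrow>
     integral {-a..a} (\<lambda>x. c * u x * deriv \<phi> x - u x * deriv (deriv \<phi>) x)
       = integral {-a..a} (\<lambda>x. F x * \<phi> x))"

definition chi :: "real \<Rightarrow> real \<Rightarrow> real" where
  "chi w m = (if 0 \<le> w \<and> 0 \<le> m then 1 else 0)"

definition Pa :: "real \<Rightarrow> real \<Rightarrow> real \<Rightarrow> real \<Rightarrow> real
                  \<Rightarrow> (real \<Rightarrow> real) \<Rightarrow> (real \<Rightarrow> real) \<Rightarrow> bool" where
  "Pa r K \<mu> a c w m \<longleftrightarrow>
     continuous_on {-a..a} w \<and> continuous_on {-a..a} m \<and>
     weak_sol a c w (\<lambda>x. fw \<mu> (w x) (m x) * chi (w x) (m x)) \<and>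
     weak_sol a c m (\<lambda>x. fm r K \<mu> (w x) (m x) * chi (w x) (m x)) \<and>
     w (-a) = fst (eqpt r K \<mu>) \<and> m (-a) = snd (eqpt r K \<mu>) \<and>
     w a = 0 \<and> m a = 0"

end

theory Submission
  imports Defs "HOL-Computational_Algebra.Polynomial"
begin

text \<open>Both components are nonnegative by a weak maximum principle: on an interval where, say,
  \<open>w < 0\<close>, the indicator switches the reaction off, so \<open>w\<close> solves \<open>-c w' - w'' = 0\<close> in the sense
  of distributions and is therefore (du Bois-Reymond) of the form \<open>A + B \<integral> exp (-c x)\<close>;
  such a monotone function cannot be negative inside an interval and nonnegative at both ends.
  With the indicators gone, the weak solution is classical. At an interior zero of \<open>w\<close> with
  \<open>m > 0\<close> we would have \<open>w' = 0\<close> and \<open>w'' = -\<mu> m < 0\<close>, contradicting the minimum; hence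
  \<open>w\<close> and \<open>m\<close> vanish together, with their derivatives, and a Gronwall estimate for the energy
  \<open>w\<^sup>2 + w'\<^sup>2 + m\<^sup>2 + m'\<^sup>2\<close> propagates this zero back to \<open>-a\<close>, where
  \<open>(w, m) = (w*, m*)\<close> lies in \<open>(0,1) \<times> (0,K)\<close>.\<close>

section \<open>The coexistence equilibrium\<close>

text \<open>At an equilibrium, the total density \<open>n = w + m\<close> is a root of this quadratic; with
  \<open>A = 1 - n\<close> and \<open>B = r (n/K - 1)\<close> the equilibrium is then \<open>(n B, n A) / (A + B)\<close>.\<close>
definition eq_quadratic :: "real \<Rightarrow> real \<Rightarrow> real \<Rightarrow> real \<Rightarrow> real" where
  "eq_quadratic r K \<mu> n = (1 - n) * (r * (n/K - 1)) - \<mu> * (r * (n/K - 1) - (1 - n))"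

lemma eq_quadratic_root_unique:
  assumes "0 < K" "K < 1" "0 < r" "0 < \<mu>" "K < n1" "n1 < 1" "K < n2" "n2 < 1"
    and "eq_quadratic r K \<mu> n1 = 0" "eq_quadratic r K \<mu> n2 = 0"
  shows "n1 = n2"
proof (rule ccontr)
  assume ne: "n1 \<noteq> n2"
  define al where "al = -r/K"
  define be where "be = r*(1+K)/K - \<mu>*r/K - \<mu>"
  define ga where "ga = -r + \<mu>*r + \<mu>"
  have Q: "\<And>x. eq_quadratic r K \<mu> x = al*x^2 + be*x + ga"
    unfolding eq_quadratic_def al_def be_def ga_def using assms(1)
    by (simp add: field_simps power2_eq_square)
  have "(n1-n2)*(al*(n1+n2)+be) = 0"
    using assms(9,10) unfolding Q by (simp add: algebra_simps power2_eq_square)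
  hence b: "be = -al*(n1+n2)" using ne by simp
  have g: "ga = al*n1*n2"
    using assms(9) unfolding Q b by (simp add: algebra_simps power2_eq_square)
  have "eq_quadratic r K \<mu> K = al*((K-n1)*(K-n2))"
    unfolding Q b g by (simp add: algebra_simps power2_eq_square)
  moreover have "(K-n1)*(K-n2) > 0" using assms by (simp add: mult_neg_neg)
  moreover have "al < 0" unfolding al_def using assms by simp
  moreover have "eq_quadratic r K \<mu> K = \<mu>*(1-K)"
    unfolding eq_quadratic_def using assms(1) by (simp add: algebra_simps)
  ultimately show False using assms by (smt (verit) mult_pos_pos mult_neg_pos)
qed

lemma equilibrium_total_density:
  assumes r: "1 < r" and K: "0 < K" "K < 1"
    and w: "0 < w" "w < 1" and m: "0 < m" "m < K"
    and eqs: "fw \<mu> w m = 0" "fm r K \<mu> w m = 0"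
  shows "K < w + m" "w + m < 1" "eq_quadratic r K \<mu> (w + m) = 0"
    and "w * ((1 - (w+m)) + r * ((w+m)/K - 1)) = (w+m) * (r * ((w+m)/K - 1))"
proof -
  define n where "n = w + m"
  have sum: "w*(1-n) + r*m*(1-n/K) = 0"
    using eqs unfolding fw_def fm_def n_def by (simp add: algebra_simps)
  show n1: "w + m < 1"
  proof (rule ccontr)
    assume "\<not> w + m < 1"
    hence "1-n \<le> 0" "1 - n/K < 0" using K by (auto simp: field_simps n_def)
    hence "w*(1-n) \<le> 0" "r*m*(1-n/K) < 0" using w m r
      by (auto simp: mult_nonneg_nonpos mult_pos_neg)
    thus False using sum by linarith
  qed
  show n2: "K < w + m"
  proof (rule ccontr)
    assume "\<not> K < w + m"
    hence "1-n > 0" "1 - n/K \<ge> 0" using K by (auto simp: field_simps n_def)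
    hence "w*(1-n) > 0" "r*m*(1-n/K) \<ge> 0" using w m r by auto
    thus False using sum by linarith
  qed
  define A where "A = 1-n"
  define B where "B = r*(n/K-1)"
  have "w*(A+B) - n*B = w*(1-n) + r*m*(1-n/K)"
    unfolding A_def B_def n_def by (simp add: algebra_simps diff_divide_distrib add_divide_distrib)
  hence lin: "w*(A+B) = n*B" using sum by simp
  then show "w * ((1 - (w+m)) + r * ((w+m)/K - 1)) = (w+m) * (r * ((w+m)/K - 1))"
    unfolding A_def B_def n_def .
  have e: "w*A = \<mu>*(2*w - n)"
    using eqs(1) unfolding fw_def n_def A_def by (simp add: algebra_simps)
  have "n*B*A = w*A*(A+B)" using lin by (simp add: algebra_simps)
  also have "\<dots> = \<mu>*(2*(w*(A+B)) - n*(A+B))" unfolding e by (simp add: algebra_simps)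
  also have "\<dots> = \<mu>*(2*(n*B) - n*(A+B))" unfolding lin ..
  finally have "n*(A*B - \<mu>*(B - A)) = 0" by (simp add: algebra_simps)
  thus "eq_quadratic r K \<mu> (w + m) = 0"
    unfolding eq_quadratic_def A_def B_def n_def using n2 K by simp
qed

lemma equilibrium_exists:
  assumes r: "1 < r" and K: "0 < K" "K < 1" and mu: "0 < \<mu>" "\<mu> < 1 - K"
  shows "\<exists>w m. w \<in> {0<..<1} \<and> m \<in> {0<..<K} \<and> fw \<mu> w m = 0 \<and> fm r K \<mu> w m = 0"
proof -
  have QK: "eq_quadratic r K \<mu> K = \<mu>*(1-K)"
    and Q1: "eq_quadratic r K \<mu> 1 = -\<mu>*(r*(1/K-1))"
    unfolding eq_quadratic_def using K by (auto simp: algebra_simps)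
  have r1K: "r*(1/K-1) > 0" using K r by (simp add: field_simps)
  have "continuous_on {K..1} (eq_quadratic r K \<mu>)"
    unfolding eq_quadratic_def using K by (intro continuous_intros) auto
  moreover have "eq_quadratic r K \<mu> 1 \<le> 0" "0 \<le> eq_quadratic r K \<mu> K"
    using QK Q1 r1K K mu by auto
  ultimately obtain n where n: "K \<le> n" "n \<le> 1" "eq_quadratic r K \<mu> n = 0"
    using IVT2'[of "eq_quadratic r K \<mu>"] K by force
  have nK: "K < n" "n < 1"
    using n QK Q1 mu K r1K by (auto simp: order.order_iff_strict)
  define A where "A = 1-n"
  define B where "B = r*(n/K-1)"
  have A: "0 < A" unfolding A_def using nK by auto
  have B: "0 < B" unfolding B_def using nK K r by (simp add: field_simps)
  have QAB: "A*B - \<mu>*(B - A) = 0" using n(3) unfolding eq_quadratic_def A_def B_def by simp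
  define s where "s = n/(A+B)"
  have s: "0 < s" "s*(A+B) = n" unfolding s_def using A B nK K by auto
  define w where "w = s*B"
  define m where "m = s*A"
  have nwm: "w + m = n" unfolding w_def m_def using s(2) by (simp add: algebra_simps)
  have "0 < w" "0 < m" unfolding w_def m_def using A B s by simp_all
  moreover have "w < 1"
  proof -
    have "w < w + m" unfolding m_def using A s by simp
    thus ?thesis using nwm nK by simp
  qed
  moreover have "m < K"
  proof -
    have "A - r < 0" unfolding A_def using nK K r by simp
    hence "(n-K)*(A-r) < 0" using nK by (simp add: mult_pos_neg)
    moreover have "K*B = r*(n-K)" unfolding B_def using K by (simp add: field_simps)
    ultimately have "s*(A+B)*A < K*(A+B)" unfolding s(2) by (simp add: algebra_simps)
    thus ?thesis unfolding m_def using A B by (simp add: mult.commute)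
  qed
  moreover have "fw \<mu> w m = 0"
  proof -
    have "fw \<mu> w m = w*A + \<mu>*(m-w)" unfolding fw_def A_def nwm ..
    also have "\<dots> = s*(A*B - \<mu>*(B - A))" unfolding w_def m_def by (simp add: algebra_simps)
    finally show ?thesis using QAB by simp
  qed
  moreover have "fm r K \<mu> w m = 0"
  proof -
    have "1 - (w+m)/K = -B/r" unfolding B_def nwm using r K by (simp add: field_simps)
    hence "fm r K \<mu> w m = -(m*B) + \<mu>*(w-m)" unfolding fm_def using r by simp
    also have "\<dots> = -s*(A*B - \<mu>*(B - A))" unfolding w_def m_def by (simp add: algebra_simps)
    finally show ?thesis using QAB by simp
  qed
  ultimately show ?thesis by auto
qed

lemma eqpt_mem_box:
  assumes "assumption1 r K \<mu>"
  shows "fst (eqpt r K \<mu>) \<in> {0<..<1}" "snd (eqpt r K \<mu>) \<in> {0<..<K}"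
proof -
  have r: "1 < r" and mu: "0 < \<mu>" "\<mu> < 1 - K" and K: "0 < K" "K < 1"
    using assms unfolding assumption1_def by auto
  define P where "P = (\<lambda>p::real \<times> real. fst p \<in> {0<..<1} \<and> snd p \<in> {0<..<K} \<and>
                      fw \<mu> (fst p) (snd p) = 0 \<and> fm r K \<mu> (fst p) (snd p) = 0)"
  have unique: "p = q" if "P p" "P q" for p q
  proof -
    obtain w1 m1 w2 m2 where pq: "p = (w1, m1)" "q = (w2, m2)" by fastforce
    have "0 < w1" "w1 < 1" "0 < m1" "m1 < K" "fw \<mu> w1 m1 = 0" "fm r K \<mu> w1 m1 = 0"
      using that(1) pq unfolding P_def by auto
    note t1 = equilibrium_total_density[OF r K this]
    have "0 < w2" "w2 < 1" "0 < m2" "m2 < K" "fw \<mu> w2 m2 = 0" "fm r K \<mu> w2 m2 = 0"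
      using that(2) pq unfolding P_def by auto
    note t2 = equilibrium_total_density[OF r K this]
    have n: "w1 + m1 = w2 + m2"
      using t1 t2 K r mu eq_quadratic_root_unique[of K r \<mu> "w1+m1" "w2+m2"] by auto
    define n where "n = w1 + m1"
    have "K < n" using t1(1) unfolding n_def .
    hence "0 < (n - K)/K" using K by (intro divide_pos_pos) auto
    also have "(n - K)/K = n/K - 1" using K by (simp add: diff_divide_distrib)
    finally have "n/K - 1 > 0" .
    hence "r*(n/K-1) > 0" using r by simp
    hence "(1-n) + r*(n/K-1) > 0" using t1(2) unfolding n_def by linarith
    moreover have "w1*((1-n) + r*(n/K-1)) = w2*((1-n) + r*(n/K-1))"
      using t1(4) t2(4) n unfolding n_def by simp
    ultimately have "w1 = w2" by simp
    thus ?thesis using n pq by simp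
  qed
  obtain w m where "P (w, m)"
    using equilibrium_exists[OF r K mu] unfolding P_def by auto
  hence "\<exists>!p. P p" using unique by blast
  hence "P (THE p. P p)" by (rule theI')
  thus "fst (eqpt r K \<mu>) \<in> {0<..<1}" "snd (eqpt r K \<mu>) \<in> {0<..<K}"
    unfolding eqpt_def P_def by auto
qed

section \<open>Smooth functions and bump functions\<close>

definition smooth_upto :: "nat \<Rightarrow> (real \<Rightarrow> real) \<Rightarrow> bool" where
  "smooth_upto n f \<longleftrightarrow> (\<forall>k\<le>n. \<forall>x. (deriv ^^ k) f differentiable (at x))"

definition smooth :: "(real \<Rightarrow> real) \<Rightarrow> bool" where
  "smooth f \<longleftrightarrow> (\<forall>n x. (deriv ^^ n) f differentiable (at x))"

lemma smooth_iff_smooth_upto: "smooth f \<longleftrightarrow> (\<forall>n. smooth_upto n f)"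
  unfolding smooth_def smooth_upto_def by blast

lemma smooth_upto_0: "smooth_upto 0 f \<longleftrightarrow> (\<forall>x. f differentiable (at x))"
  unfolding smooth_upto_def by auto

lemma smooth_upto_Suc:
  "smooth_upto (Suc n) f \<longleftrightarrow> (\<forall>x. f differentiable (at x)) \<and> smooth_upto n (deriv f)"
proof -
  have shift: "(deriv ^^ Suc k) f = (deriv ^^ k) (deriv f)" for k
    by (simp add: funpow_Suc_right del: funpow.simps)
  show ?thesis
    unfolding smooth_upto_def
    by (metis (no_types, lifting) Suc_le_mono funpow_0 le0 not0_implies_Suc shift)
qed

lemma smooth_upto_SucD: "smooth_upto (Suc n) f \<Longrightarrow> smooth_upto n f"
  unfolding smooth_upto_def by auto

lemma smooth_upto_differentiable: "smooth_upto n f \<Longrightarrow> f differentiable (at x)"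
  unfolding smooth_upto_def by (metis funpow_0 le0)

lemma has_real_derivative_deriv:
  "(f::real \<Rightarrow> real) differentiable (at x) \<Longrightarrow> (f has_real_derivative deriv f x) (at x)"
  by (simp add: DERIV_deriv_iff_real_differentiable)

lemma deriv_add_eq:
  fixes f g :: "real \<Rightarrow> real"
  assumes "\<forall>x. f differentiable (at x)" "\<forall>x. g differentiable (at x)"
  shows "deriv (\<lambda>x. f x + g x) = (\<lambda>x. deriv f x + deriv g x)"
  using assms by (intro ext DERIV_imp_deriv DERIV_add has_real_derivative_deriv) auto

lemma deriv_cmult_eq:
  fixes f :: "real \<Rightarrow> real"
  assumes "\<forall>x. f differentiable (at x)"
  shows "deriv (\<lambda>x. c * f x) = (\<lambda>x. c * deriv f x)"
  using assms by (intro ext DERIV_imp_deriv DERIV_cmult has_real_derivative_deriv) auto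

lemma deriv_mult_eq:
  fixes f g :: "real \<Rightarrow> real"
  assumes "\<forall>x. f differentiable (at x)" "\<forall>x. g differentiable (at x)"
  shows "deriv (\<lambda>x. f x * g x) = (\<lambda>x. deriv f x * g x + f x * deriv g x)"
proof (intro ext DERIV_imp_deriv)
  fix x
  have "((\<lambda>x. f x * g x) has_real_derivative deriv f x * g x + deriv g x * f x) (at x)"
    using assms by (intro DERIV_mult has_real_derivative_deriv) auto
  thus "((\<lambda>x. f x * g x) has_real_derivative deriv f x * g x + f x * deriv g x) (at x)"
    by (simp add: mult.commute)
qed

lemma deriv_affine_eq:
  fixes f :: "real \<Rightarrow> real"
  assumes "\<forall>x. f differentiable (at x)"
  shows "deriv (\<lambda>x. f (s*x + t)) = (\<lambda>x. s * deriv f (s*x + t))"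
proof (intro ext DERIV_imp_deriv)
  fix x
  have "((\<lambda>x. s*x + t) has_real_derivative s) (at x)" by (auto intro!: derivative_eq_intros)
  from DERIV_chain2[OF has_real_derivative_deriv this] assms
  show "((\<lambda>x. f (s*x + t)) has_real_derivative s * deriv f (s*x + t)) (at x)"
    by (simp add: mult.commute)
qed

lemma smooth_upto_add: "smooth_upto n f \<Longrightarrow> smooth_upto n g \<Longrightarrow> smooth_upto n (\<lambda>x. f x + g x)"
proof (induction n arbitrary: f g)
  case 0 thus ?case unfolding smooth_upto_0 by (auto intro: derivative_intros)
next
  case (Suc n)
  have d: "\<forall>x. f differentiable (at x)" "\<forall>x. g differentiable (at x)"
    using Suc.prems smooth_upto_differentiable by blast+
  show ?case
    unfolding smooth_upto_Suc deriv_add_eq[OF d] using Suc d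
    by (auto simp: smooth_upto_Suc intro: derivative_intros)
qed

lemma smooth_upto_cmult: "smooth_upto n f \<Longrightarrow> smooth_upto n (\<lambda>x. c * f x)"
proof (induction n arbitrary: f)
  case 0 thus ?case unfolding smooth_upto_0 by (auto intro: derivative_intros)
next
  case (Suc n)
  have d: "\<forall>x. f differentiable (at x)" using Suc.prems smooth_upto_differentiable by blast
  show ?case
    unfolding smooth_upto_Suc deriv_cmult_eq[OF d] using Suc d
    by (auto simp: smooth_upto_Suc intro: derivative_intros)
qed

lemma smooth_upto_mult: "smooth_upto n f \<Longrightarrow> smooth_upto n g \<Longrightarrow> smooth_upto n (\<lambda>x. f x * g x)"
proof (induction n arbitrary: f g)
  case 0 thus ?case unfolding smooth_upto_0 by (auto intro: derivative_intros)
next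
  case (Suc n)
  have d: "\<forall>x. f differentiable (at x)" "\<forall>x. g differentiable (at x)"
    using Suc.prems smooth_upto_differentiable by blast+
  have "smooth_upto n (\<lambda>x. deriv f x * g x)" "smooth_upto n (\<lambda>x. f x * deriv g x)"
    using Suc.IH Suc.prems smooth_upto_SucD by (auto simp: smooth_upto_Suc)
  thus ?case
    unfolding smooth_upto_Suc deriv_mult_eq[OF d] using d smooth_upto_add
    by (auto intro: derivative_intros)
qed

lemma smooth_upto_affine: "smooth_upto n f \<Longrightarrow> smooth_upto n (\<lambda>x. f (s*x + t))"
proof (induction n arbitrary: f)
  case 0 thus ?case unfolding smooth_upto_0
    by (auto intro!: differentiable_compose[where f=f and g="\<lambda>x. s*x + t", unfolded o_def]
        derivative_intros)
next
  case (Suc n)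
  have d: "\<forall>x. f differentiable (at x)" using Suc.prems smooth_upto_differentiable by blast
  have "smooth_upto n (\<lambda>x. s * deriv f (s*x + t))"
    using Suc by (auto simp: smooth_upto_Suc intro: smooth_upto_cmult)
  moreover have "\<forall>x. (\<lambda>x. f (s*x + t)) differentiable (at x)"
    using d by (auto intro!: differentiable_compose[where f=f and g="\<lambda>x. s*x + t", unfolded o_def]
        derivative_intros)
  ultimately show ?case unfolding smooth_upto_Suc deriv_affine_eq[OF d] by simp
qed

lemma smooth_add: "smooth f \<Longrightarrow> smooth g \<Longrightarrow> smooth (\<lambda>x. f x + g x)"
  by (simp add: smooth_iff_smooth_upto smooth_upto_add)

lemma smooth_cmult: "smooth f \<Longrightarrow> smooth (\<lambda>x. c * f x)"
  by (simp add: smooth_iff_smooth_upto smooth_upto_cmult)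

lemma smooth_mult: "smooth f \<Longrightarrow> smooth g \<Longrightarrow> smooth (\<lambda>x. f x * g x)"
  by (simp add: smooth_iff_smooth_upto smooth_upto_mult)

lemma smooth_affine: "smooth f \<Longrightarrow> smooth (\<lambda>x. f (s*x + t))"
  by (simp add: smooth_iff_smooth_upto smooth_upto_affine)

lemma smooth_diff: "smooth f \<Longrightarrow> smooth g \<Longrightarrow> smooth (\<lambda>x. f x - g x)"
  using smooth_add[of f "\<lambda>x. (-1) * g x"] smooth_cmult[of g "-1"] by simp

lemma smooth_differentiable: "smooth f \<Longrightarrow> f differentiable (at x)"
  unfolding smooth_def by (metis funpow_0)

lemma smooth_continuous_on: "smooth f \<Longrightarrow> continuous_on S f"
  by (meson continuous_at_imp_continuous_on differentiable_imp_continuous_within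
      smooth_differentiable)

lemma smooth_ode:
  assumes "\<And>x. (f has_real_derivative (c * f x + g x)) (at x)" "smooth g"
  shows "smooth f"
proof -
  have d: "deriv f = (\<lambda>x. c * f x + g x)" using assms(1) by (intro ext DERIV_imp_deriv)
  have df: "\<forall>x. f differentiable (at x)" using assms(1) real_differentiable_def by blast
  have "smooth_upto n f" for n
  proof (induction n)
    case 0 thus ?case using df smooth_upto_0 by blast
  next
    case (Suc n)
    have "smooth_upto n (\<lambda>x. c * f x + g x)"
      using Suc smooth_upto_add smooth_upto_cmult assms(2) smooth_iff_smooth_upto by blast
    thus ?case using smooth_upto_Suc df d by simp
  qed
  thus ?thesis by (simp add: smooth_iff_smooth_upto)
qed

text \<open>The derivative of \<open>poly p (1/x) * exp (-1/x)\<close> has the same form, with the polynomial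
  \<open>x\<^sup>2 (p - p')\<close>.\<close>
definition flat_poly_exp :: "real poly \<Rightarrow> real \<Rightarrow> real" where
  "flat_poly_exp p x = (if x > 0 then poly p (1/x) * exp (-(1/x)) else 0)"

definition flat_deriv_poly :: "real poly \<Rightarrow> real poly" where
  "flat_deriv_poly p = [:0, 0, 1:] * (p - pderiv p)"

lemma poly_times_exp_minus_tendsto_0:
  "((\<lambda>t::real. poly p t * exp (-t)) \<longlongrightarrow> 0) at_top"
proof -
  have e: "poly p t * exp (-t) = (\<Sum>i\<le>degree p. coeff p i * (t ^ i / exp t))" for t
    unfolding poly_altdef by (simp add: sum_distrib_right exp_minus divide_inverse mult.assoc)
  have "((\<lambda>t. \<Sum>i\<le>degree p. coeff p i * (t ^ i / exp t)) \<longlongrightarrow> (\<Sum>i\<le>degree p. coeff p i * 0)) at_top"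
    by (intro tendsto_intros tendsto_power_div_exp_0)
  thus ?thesis unfolding e by simp
qed

lemma flat_poly_exp_tendsto_0: "(flat_poly_exp p \<longlongrightarrow> 0) (at 0)"
proof (rule filterlim_split_at)
  show "(flat_poly_exp p \<longlongrightarrow> 0) (at_left 0)"
    by (rule tendsto_eventually)
      (auto simp: flat_poly_exp_def eventually_at_left_field intro: exI[of _ "-1"])
next
  have "((\<lambda>x. poly p (inverse x) * exp (-(inverse x))) \<longlongrightarrow> 0) (at_right 0)"
    using filterlim_compose[OF poly_times_exp_minus_tendsto_0 filterlim_inverse_at_top_right]
    by (simp add: o_def)
  moreover have "eventually (\<lambda>x. poly p (inverse x) * exp (-(inverse x)) = flat_poly_exp p x)
      (at_right 0)"
    by (auto simp: flat_poly_exp_def eventually_at_right_field inverse_eq_divide intro: exI[of _ 1])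
  ultimately show "(flat_poly_exp p \<longlongrightarrow> 0) (at_right 0)" by (rule Lim_transform_eventually)
qed

lemma flat_poly_exp_has_derivative:
  "(flat_poly_exp p has_real_derivative flat_poly_exp (flat_deriv_poly p) x) (at x)"
proof (cases "x > 0")
  case True
  have "((\<lambda>y. poly p (1/y) * exp (-(1/y))) has_real_derivative
      (-(1/x^2) * poly (pderiv p) (1/x)) * exp (-(1/x)) + (exp (-(1/x)) * (1/x^2)) * poly p (1/x))
      (at x)"
    using True by (auto intro!: derivative_eq_intros simp: power2_eq_square)
  moreover have "(-(1/x^2) * poly (pderiv p) (1/x)) * exp (-(1/x))
      + (exp (-(1/x)) * (1/x^2)) * poly p (1/x) = flat_poly_exp (flat_deriv_poly p) x"
    using True unfolding flat_poly_exp_def flat_deriv_poly_def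
    by (simp add: field_simps power2_eq_square)
  ultimately have "((\<lambda>y. poly p (1/y) * exp (-(1/y))) has_real_derivative
      flat_poly_exp (flat_deriv_poly p) x) (at x)"
    by simp
  thus ?thesis
    by (rule has_field_derivative_transform_within_open[where S="{0<..}"])
      (use True in \<open>auto simp: flat_poly_exp_def\<close>)
next
  case False
  show ?thesis
  proof (cases "x < 0")
    case True
    have "((\<lambda>y. 0) has_real_derivative flat_poly_exp (flat_deriv_poly p) x) (at x)"
      using True by (simp add: flat_poly_exp_def)
    thus ?thesis
      by (rule has_field_derivative_transform_within_open[where S="{..<0}"])
        (use True in \<open>auto simp: flat_poly_exp_def\<close>)
  next
    case False
    hence x: "x = 0" using \<open>\<not> x > 0\<close> by simp
    have e: "(flat_poly_exp p (0 + h) - flat_poly_exp p 0) / h = flat_poly_exp (pCons 0 p) h" for h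
      by (simp add: flat_poly_exp_def field_simps)
    have "((\<lambda>h. (flat_poly_exp p (0 + h) - flat_poly_exp p 0) / h) \<longlongrightarrow> 0) (at 0)"
      unfolding e by (rule flat_poly_exp_tendsto_0)
    thus ?thesis unfolding x DERIV_def by (simp add: flat_poly_exp_def)
  qed
qed

lemma smooth_flat_poly_exp: "smooth (flat_poly_exp p)"
proof -
  have "deriv (flat_poly_exp p) = flat_poly_exp (flat_deriv_poly p)" for p
    using flat_poly_exp_has_derivative DERIV_imp_deriv by blast
  hence "(deriv ^^ n) (flat_poly_exp p) = flat_poly_exp ((flat_deriv_poly ^^ n) p)" for n
    by (induction n) auto
  thus ?thesis
    unfolding smooth_def using flat_poly_exp_has_derivative real_differentiable_def by metis
qed

definition bump :: "real \<Rightarrow> real \<Rightarrow> real \<Rightarrow> real" where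
  "bump p q x = flat_poly_exp 1 ((x - p)/(q - p)) * flat_poly_exp 1 ((q - x)/(q - p))"

lemma bump_altdef:
  "bump p q x = (if (x - p)/(q - p) > 0 \<and> (q - x)/(q - p) > 0
     then exp (-((q - p)/(x - p))) * exp (-((q - p)/(q - x))) else 0)"
  unfolding bump_def flat_poly_exp_def by simp

lemma smooth_bump: "smooth (bump p q)"
proof -
  have "bump p q = (\<lambda>x. flat_poly_exp 1 ((1/(q-p))*x + (-p/(q-p)))
      * flat_poly_exp 1 ((-1/(q-p))*x + q/(q-p)))"
    unfolding bump_def by (intro ext) (simp add: diff_divide_distrib add_divide_distrib)
  thus ?thesis by (simp only:) (intro smooth_mult smooth_affine smooth_flat_poly_exp)
qed

lemma bump_nonneg: "0 \<le> bump p q x"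
  unfolding bump_altdef by auto

lemma bump_pos: "p < x \<Longrightarrow> x < q \<Longrightarrow> 0 < bump p q x"
  unfolding bump_altdef by auto

lemma bump_eq_0: "p < q \<Longrightarrow> x \<notin> {p<..<q} \<Longrightarrow> bump p q x = 0"
  unfolding bump_altdef by (auto simp: field_simps)

lemma continuous_on_bump: "continuous_on S (bump p q)"
  using smooth_bump smooth_continuous_on by blast



section \<open>Weak solutions of the homogeneous equation\<close>

lemma integral_has_real_derivative_interior:
  fixes f :: "real \<Rightarrow> real"
  assumes "continuous_on {L..R} f" "L < x" "x < R"
  shows "((\<lambda>u. integral {L..u} f) has_real_derivative f x) (at x)"
proof -
  have "((\<lambda>u. integral {L..u} f) has_real_derivative f x) (at x within {L..R})"
    using integral_has_real_derivative[OF assms(1)] assms by auto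
  moreover have "x \<in> interior {L..R}" using assms by auto
  ultimately show ?thesis using at_within_interior by metis
qed

lemma integral_vanishing_below_has_derivative:
  fixes f :: "real \<Rightarrow> real"
  assumes f: "continuous_on UNIV f" and "L < P" and f0: "\<And>t. t < P \<Longrightarrow> f t = 0"
  shows "((\<lambda>u. integral {L..u} f) has_real_derivative f x) (at x)"
proof (cases "L < x")
  case True
  show ?thesis
    by (rule integral_has_real_derivative_interior[of L "x+1"]) (use True f continuous_on_subset in auto)
next
  case False
  hence xP: "x < P" using \<open>L < P\<close> by simp
  have zero: "integral {L..y} f = 0" if "y < P" for y
  proof (cases "L \<le> y")
    case True
    have "(f has_integral 0) {L..y}" by (rule has_integral_is_0) (use that f0 in auto)
    thus ?thesis by (simp add: integral_unique)
  qed simp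
  have "((\<lambda>u. 0) has_real_derivative f x) (at x)" using f0[OF xP] by simp
  thus ?thesis
    by (rule has_field_derivative_transform_within_open[where S="{..<P}"]) (use xP zero in auto)
qed

lemma integral_vanishing_above:
  fixes f :: "real \<Rightarrow> real"
  assumes "continuous_on UNIV f" "\<And>t. Q \<le> t \<Longrightarrow> f t = 0" "L \<le> Q" "Q \<le> x"
  shows "integral {L..x} f = integral {L..Q} f"
proof -
  have "integral {L..Q} f + integral {Q..x} f = integral {L..x} f"
    using Henstock_Kurzweil_Integration.integral_combine[of L Q x f] assms continuous_on_subset[OF assms(1)]
    by (auto intro: integrable_continuous_real)
  moreover have "integral {Q..x} f = 0"
    using has_integral_is_0[of "{Q..x}" f] assms(2) by (auto simp: integral_unique)
  ultimately show ?thesis by simp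
qed

lemma integral_supported_subinterval:
  fixes f :: "real \<Rightarrow> real"
  assumes "f integrable_on {P..Q}" "\<And>x. x \<notin> {P..Q} \<Longrightarrow> f x = 0" "{P..Q} \<subseteq> {s..t}"
  shows "integral {s..t} f = integral {P..Q} f"
  using has_integral_on_superset[OF integrable_integral[OF assms(1)] assms(2,3)]
  by (simp add: integral_unique)

lemma primitive_compact_support:
  fixes f :: "real \<Rightarrow> real"
  assumes f: "continuous_on UNIV f" and supp: "\<And>x. x \<notin> {P<..<Q} \<Longrightarrow> f x = 0"
    and mean0: "integral {P..Q} f = 0" and PQ: "P < Q"
  shows "((\<lambda>x. integral {P-1..x} f) has_real_derivative f x) (at x)"
    and "x \<notin> {P<..<Q} \<Longrightarrow> integral {P-1..x} f = 0"
proof -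
  show "((\<lambda>x. integral {P-1..x} f) has_real_derivative f x) (at x)"
    by (rule integral_vanishing_below_has_derivative[OF f, of _ P]) (use supp in auto)
  show "integral {P-1..x} f = 0" if "x \<notin> {P<..<Q}"
  proof (cases "x \<le> P")
    case True
    have "(f has_integral 0) {P-1..x}" by (rule has_integral_is_0) (use True supp in auto)
    thus ?thesis by (simp add: integral_unique)
  next
    case False
    hence "Q \<le> x" using that by auto
    hence "integral {P-1..x} f = integral {P-1..Q} f"
      by (intro integral_vanishing_above[OF f]) (use supp PQ in auto)
    also have "\<dots> = integral {P..Q} f"
      by (rule integral_supported_subinterval)
        (use f supp in \<open>auto intro: integrable_continuous_real continuous_on_subset\<close>)
    finally show ?thesis using mean0 by simp
  qed
qed

lemma integral_pos_of_pos_point: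
  fixes f :: "real \<Rightarrow> real"
  assumes "continuous_on {s..t} f" "\<And>x. x \<in> {s..t} \<Longrightarrow> 0 \<le> f x"
    and "x0 \<in> {s..t}" "0 < f x0" "s < t"
  shows "0 < integral {s..t} f"
proof -
  have i: "f integrable_on {s..t}" using assms(1) integrable_continuous_real by blast
  have "0 \<le> integral {s..t} f" using assms(2) i by (intro integral_nonneg) auto
  moreover have "integral {s..t} f \<noteq> 0"
  proof
    assume "integral {s..t} f = 0"
    hence "(f has_integral 0) (cbox s t)" using i by (metis box_real(2) integrable_integral)
    from has_integral_0_cbox_imp_0[OF _ _ this, of x0] assms show False by auto
  qed
  ultimately show ?thesis by simp
qed

lemma fundamental_theorem_of_calculus_real:
  fixes f :: "real \<Rightarrow> real"
  assumes "a \<le> b" "\<And>x. x \<in> {a..b} \<Longrightarrow> (f has_real_derivative f' x) (at x)"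
  shows "(f' has_integral (f b - f a)) {a..b}"
  by (rule fundamental_theorem_of_calculus[OF assms(1)])
    (use assms(2) in \<open>auto simp: has_real_derivative_iff_has_vector_derivative[symmetric]
      intro: has_field_derivative_at_within\<close>)

text \<open>A primitive of \<open>exp (-c x)\<close>: the constants and \<open>exp_prim c\<close> span the solutions of
  \<open>-c u' - u'' = 0\<close>.\<close>
definition exp_prim :: "real \<Rightarrow> real \<Rightarrow> real" where
  "exp_prim c x = (if c = 0 then x else (1 - exp (-c*x))/c)"

lemma exp_prim_has_derivative: "(exp_prim c has_real_derivative exp (-c*x)) (at x)"
proof (cases "c = 0")
  case False
  have "((\<lambda>x. (1 - exp (-c*x))/c) has_real_derivative exp (-c*x)) (at x)"
    using False by (auto intro!: derivative_eq_intros)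
  thus ?thesis unfolding exp_prim_def using False by simp
next
  case True
  hence "exp_prim c = (\<lambda>x. x)" unfolding exp_prim_def by auto
  thus ?thesis using True by simp
qed

lemma exp_prim_strict_mono: "x < y \<Longrightarrow> exp_prim c x < exp_prim c y"
  by (rule DERIV_pos_imp_increasing[of x y "exp_prim c"])
    (use exp_prim_has_derivative in \<open>auto intro!: exI[of _ "exp (-c*_)"]\<close>)

lemma exp_prim_mono: "x \<le> y \<Longrightarrow> exp_prim c x \<le> exp_prim c y"
  using exp_prim_strict_mono by (cases "x = y") (auto simp: less_imp_le)

lemma continuous_on_exp_prim: "continuous_on S (exp_prim c)"
  using exp_prim_has_derivative by (meson DERIV_continuous continuous_at_imp_continuous_on)

text \<open>The formal adjoint \<open>c \<phi>' - \<phi>''\<close> of \<open>-c u' - u''\<close> maps compactly supported smooth functions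
  onto those orthogonal to its kernel \<open>{1, exp_prim c}\<close>.\<close>
lemma adjoint_equation_compact_solution:
  fixes \<psi> :: "real \<Rightarrow> real"
  assumes PQ: "P < Q" and \<psi>: "smooth \<psi>" and supp: "\<And>x. x \<notin> {P<..<Q} \<Longrightarrow> \<psi> x = 0"
    and orth0: "integral {P..Q} \<psi> = 0"
    and orth1: "integral {P..Q} (\<lambda>x. exp_prim c x * \<psi> x) = 0"
  obtains \<phi> where "smooth \<phi>" "\<And>x. x \<notin> {P..Q} \<Longrightarrow> \<phi> x = 0"
    "\<And>x. c * deriv \<phi> x - deriv (deriv \<phi>) x = \<psi> x"
proof -
  have \<psi>c: "continuous_on UNIV \<psi>" using \<psi> smooth_continuous_on by blast
  define \<Psi> where "\<Psi> x = integral {P-1..x} \<psi>" for x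
  have \<Psi>D: "\<And>x. (\<Psi> has_real_derivative \<psi> x) (at x)" and \<Psi>0: "\<And>x. x \<notin> {P<..<Q} \<Longrightarrow> \<Psi> x = 0"
    using primitive_compact_support[OF \<psi>c supp orth0 PQ] unfolding \<Psi>_def by auto
  have \<Psi>c: "continuous_on UNIV \<Psi>"
    using \<Psi>D by (meson DERIV_continuous continuous_at_imp_continuous_on)
  define g where "g t = exp (-c*t) * \<Psi> t" for t
  have gc: "continuous_on UNIV g" unfolding g_def by (intro continuous_intros \<Psi>c)
  have g0: "\<And>t. t \<notin> {P<..<Q} \<Longrightarrow> g t = 0" unfolding g_def using \<Psi>0 by auto
  have "integral {P..Q} g = 0"
  proof -
    have "((\<lambda>t. g t + exp_prim c t * \<psi> t) has_integral
        (exp_prim c Q * \<Psi> Q - exp_prim c P * \<Psi> P)) {P..Q}"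
    proof (rule fundamental_theorem_of_calculus_real)
      fix x
      show "((\<lambda>t. exp_prim c t * \<Psi> t) has_real_derivative g x + exp_prim c x * \<psi> x) (at x)"
        using DERIV_mult[OF exp_prim_has_derivative \<Psi>D] unfolding g_def
        by (simp add: mult.commute)
    qed (use PQ in auto)
    hence "integral {P..Q} (\<lambda>t. g t + exp_prim c t * \<psi> t) = 0"
      using \<Psi>0[of P] \<Psi>0[of Q] by (simp add: integral_unique)
    moreover have "integral {P..Q} (\<lambda>t. g t + exp_prim c t * \<psi> t)
        = integral {P..Q} g + integral {P..Q} (\<lambda>t. exp_prim c t * \<psi> t)"
      by (intro integral_add integrable_continuous_real continuous_intros continuous_on_subset[OF gc]
          continuous_on_subset[OF \<psi>c] continuous_on_exp_prim) auto
    ultimately show ?thesis using orth1 by simp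
  qed
  define I where "I x = integral {P-1..x} g" for x
  have ID: "\<And>x. (I has_real_derivative g x) (at x)" and I0: "\<And>x. x \<notin> {P<..<Q} \<Longrightarrow> I x = 0"
    using primitive_compact_support[OF gc g0 \<open>integral {P..Q} g = 0\<close> PQ] unfolding I_def by auto
  define \<phi> where "\<phi> x = -(exp (c*x) * I x)" for x
  have \<phi>D: "(\<phi> has_real_derivative c * \<phi> x + (- \<Psi> x)) (at x)" for x
  proof -
    have "(\<phi> has_real_derivative -(c * exp (c*x) * I x + exp (c*x) * g x)) (at x)"
      unfolding \<phi>_def by (auto intro!: derivative_eq_intros ID)
    moreover have "exp (c*x) * g x = \<Psi> x" unfolding g_def by (simp add: exp_minus field_simps)
    ultimately show ?thesis unfolding \<phi>_def by (simp add: algebra_simps)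
  qed
  have "smooth \<Psi>" by (rule smooth_ode[of \<Psi> 0 \<psi>]) (use \<Psi>D \<psi> in auto)
  hence "smooth (\<lambda>x. - \<Psi> x)" using smooth_cmult[of \<Psi> "-1"] by simp
  hence "smooth \<phi>" using smooth_ode[OF \<phi>D] by blast
  moreover have "\<phi> x = 0" if "x \<notin> {P..Q}" for x
    unfolding \<phi>_def using that I0 by auto
  moreover have "c * deriv \<phi> x - deriv (deriv \<phi>) x = \<psi> x" for x
  proof -
    have d\<phi>: "deriv \<phi> = (\<lambda>x. c * \<phi> x - \<Psi> x)" using \<phi>D by (intro ext DERIV_imp_deriv) simp
    have "((\<lambda>x. c * \<phi> x - \<Psi> x) has_real_derivative c * (c * \<phi> x - \<Psi> x) - \<psi> x) (at x)"
      using \<phi>D[of x] \<Psi>D[of x] by (auto intro!: derivative_eq_intros)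
    hence "deriv (deriv \<phi>) x = c * (c * \<phi> x - \<Psi> x) - \<psi> x"
      unfolding d\<phi> by (rule DERIV_imp_deriv)
    thus ?thesis unfolding d\<phi> by simp
  qed
  ultimately show ?thesis using that by blast
qed

lemma test_fun_of_smooth:
  assumes "smooth \<phi>" "-a < P" "Q < a" "\<And>x. x \<notin> {P..Q} \<Longrightarrow> \<phi> x = 0"
  shows "test_fun a \<phi>"
  unfolding test_fun_def
proof
  show "\<forall>n x. (deriv ^^ n) \<phi> differentiable at x" using assms(1) unfolding smooth_def .
  define \<epsilon> where "\<epsilon> = min (a - Q) (a + P) / 2"
  have \<epsilon>: "\<epsilon> \<le> (a - Q)/2" "\<epsilon> \<le> (a + P)/2" "\<epsilon> > 0" unfolding \<epsilon>_def using assms(2,3) by auto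
  have "\<phi> x = 0" if "a - \<epsilon> \<le> \<bar>x\<bar>" for x
  proof -
    have "x \<notin> {P..Q}" using that \<epsilon> assms(2,3) by (cases "x < 0") auto
    thus ?thesis using assms(4) by blast
  qed
  with \<epsilon>(3) show "\<exists>\<epsilon>>0. \<forall>x. a - \<epsilon> \<le> \<bar>x\<bar> \<longrightarrow> \<phi> x = 0" by blast
qed

definition weak_homogeneous_on :: "real \<Rightarrow> real \<Rightarrow> real \<Rightarrow> real \<Rightarrow> (real \<Rightarrow> real) \<Rightarrow> bool" where
  "weak_homogeneous_on a c \<alpha> \<beta> u \<longleftrightarrow> (\<forall>\<phi> P Q. \<alpha> < P \<longrightarrow> P < Q \<longrightarrow> Q < \<beta> \<longrightarrow> test_fun a \<phi> \<longrightarrow>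
     (\<forall>x. x \<notin> {P..Q} \<longrightarrow> \<phi> x = 0) \<longrightarrow>
     integral {-a..a} (\<lambda>x. c * u x * deriv \<phi> x - u x * deriv (deriv \<phi>) x) = 0)"

lemma weak_homogeneous_orthogonal:
  fixes u \<psi> :: "real \<Rightarrow> real"
  assumes hom: "weak_homogeneous_on a c \<alpha> \<beta> u" and ab: "-a \<le> \<alpha>" "\<beta> \<le> a"
    and u: "continuous_on {\<alpha>..\<beta>} u" and PQ: "\<alpha> < P" "P < Q" "Q < \<beta>"
    and \<psi>: "smooth \<psi>" and supp: "\<And>x. x \<notin> {P<..<Q} \<Longrightarrow> \<psi> x = 0"
    and orth0: "integral {\<alpha>..\<beta>} \<psi> = 0"
    and orth1: "integral {\<alpha>..\<beta>} (\<lambda>x. exp_prim c x * \<psi> x) = 0"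
  shows "integral {\<alpha>..\<beta>} (\<lambda>x. u x * \<psi> x) = 0"
proof -
  have \<psi>c: "continuous_on S \<psi>" for S using \<psi> smooth_continuous_on by blast
  have supp': "\<psi> x = 0" if "x \<notin> {P..Q}" for x using supp that by auto
  have to_PQ: "integral {s..t} (\<lambda>x. f x * \<psi> x) = integral {P..Q} (\<lambda>x. f x * \<psi> x)"
    if "continuous_on {P..Q} f" "s \<le> P" "Q \<le> t" for f :: "real \<Rightarrow> real" and s t
  proof (rule integral_supported_subinterval)
    show "(\<lambda>x. f x * \<psi> x) integrable_on {P..Q}"
      using that by (intro integrable_continuous_real continuous_intros \<psi>c)
  qed (use that supp' in auto)
  have "integral {P..Q} (\<lambda>x. 1 * \<psi> x) = 0" "integral {P..Q} (\<lambda>x. exp_prim c x * \<psi> x) = 0"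
    using orth0 orth1 to_PQ[of "\<lambda>x. 1" \<alpha> \<beta>] to_PQ[of "exp_prim c" \<alpha> \<beta>] PQ
    by (simp_all add: continuous_on_exp_prim)
  then obtain \<phi> where \<phi>: "smooth \<phi>" "\<And>x. x \<notin> {P..Q} \<Longrightarrow> \<phi> x = 0"
    and adj: "\<And>x. c * deriv \<phi> x - deriv (deriv \<phi>) x = \<psi> x"
    using adjoint_equation_compact_solution[OF PQ(2) \<psi> supp] by auto
  have "test_fun a \<phi>" by (rule test_fun_of_smooth[OF \<phi>(1) _ _ \<phi>(2)]) (use ab PQ in auto)
  hence "integral {-a..a} (\<lambda>x. c * u x * deriv \<phi> x - u x * deriv (deriv \<phi>) x) = 0"
    using hom PQ \<phi>(2) unfolding weak_homogeneous_on_def by blast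
  moreover have "(\<lambda>x. c * u x * deriv \<phi> x - u x * deriv (deriv \<phi>) x) = (\<lambda>x. u x * \<psi> x)"
    using adj by (intro ext) (simp add: algebra_simps flip: adj)
  ultimately have "integral {-a..a} (\<lambda>x. u x * \<psi> x) = 0" by simp
  moreover have "integral {-a..a} (\<lambda>x. u x * \<psi> x) = integral {\<alpha>..\<beta>} (\<lambda>x. u x * \<psi> x)"
    using to_PQ[of u \<alpha> \<beta>] to_PQ[of u "-a" a] continuous_on_subset[OF u, of "{P..Q}"] PQ ab
    by simp
  ultimately show ?thesis by simp
qed


lemma integral_bump_pos: "\<alpha> < p \<Longrightarrow> p < q \<Longrightarrow> q < \<beta> \<Longrightarrow> 0 < integral {\<alpha>..\<beta>} (bump p q)"
  by (rule integral_pos_of_pos_point[of _ _ _ "(p+q)/2"])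
    (use bump_nonneg bump_pos[of p "(p+q)/2" q] in \<open>auto intro: continuous_on_bump\<close>)

lemma integral_exp_prim_bump_bounds:
  assumes "p < q"
  shows "exp_prim c p * integral {\<alpha>..\<beta>} (bump p q) \<le> integral {\<alpha>..\<beta>} (\<lambda>x. exp_prim c x * bump p q x)"
    and "integral {\<alpha>..\<beta>} (\<lambda>x. exp_prim c x * bump p q x) \<le> exp_prim c q * integral {\<alpha>..\<beta>} (bump p q)"
proof -
  have int: "(\<lambda>x. f x * bump p q x) integrable_on {\<alpha>..\<beta>}" if "continuous_on {\<alpha>..\<beta>} f" for f
    using that by (intro integrable_continuous_real continuous_intros continuous_on_bump)
  have "exp_prim c p * bump p q x \<le> exp_prim c x * bump p q x \<and>
      exp_prim c x * bump p q x \<le> exp_prim c q * bump p q x" for x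
  proof (cases "p < x \<and> x < q")
    case True thus ?thesis by (auto intro!: mult_right_mono exp_prim_mono bump_nonneg)
  qed (simp add: bump_eq_0 assms)
  hence "integral {\<alpha>..\<beta>} (\<lambda>x. exp_prim c p * bump p q x)
      \<le> integral {\<alpha>..\<beta>} (\<lambda>x. exp_prim c x * bump p q x)"
    "integral {\<alpha>..\<beta>} (\<lambda>x. exp_prim c x * bump p q x)
      \<le> integral {\<alpha>..\<beta>} (\<lambda>x. exp_prim c q * bump p q x)"
    by (intro integral_le int continuous_intros continuous_on_exp_prim; simp)+
  thus "exp_prim c p * integral {\<alpha>..\<beta>} (bump p q) \<le> integral {\<alpha>..\<beta>} (\<lambda>x. exp_prim c x * bump p q x)"
    and "integral {\<alpha>..\<beta>} (\<lambda>x. exp_prim c x * bump p q x) \<le> exp_prim c q * integral {\<alpha>..\<beta>} (bump p q)"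
    by simp_all
qed

lemma bump_moments_independent:
  fixes c :: real
  assumes "\<alpha> < p1" "p1 < q1" "q1 < p2" "p2 < q2" "q2 < \<beta>"
  defines "s1 \<equiv> integral {\<alpha>..\<beta>} (bump p1 q1)" and "s2 \<equiv> integral {\<alpha>..\<beta>} (bump p2 q2)"
    and "t1 \<equiv> integral {\<alpha>..\<beta>} (\<lambda>x. exp_prim c x * bump p1 q1 x)"
    and "t2 \<equiv> integral {\<alpha>..\<beta>} (\<lambda>x. exp_prim c x * bump p2 q2 x)"
  shows "s1 * t2 - s2 * t1 > 0"
proof -
  have s: "s1 > 0" "s2 > 0" unfolding s1_def s2_def using assms by (auto intro: integral_bump_pos)
  have "t1 \<le> exp_prim c q1 * s1" "exp_prim c p2 * s2 \<le> t2"
    unfolding s1_def s2_def t1_def t2_def using assms integral_exp_prim_bump_bounds by auto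
  hence "s1 * (exp_prim c p2 * s2) \<le> s1 * t2" "s2 * t1 \<le> s2 * (exp_prim c q1 * s1)"
    using s by (simp_all add: mult_left_mono)
  moreover have "s1 * s2 * (exp_prim c p2 - exp_prim c q1) > 0"
    using exp_prim_strict_mono[OF assms(3)] s by simp
  ultimately show ?thesis by (simp add: algebra_simps)
qed

lemma cramer_2x2:
  fixes s1 s2 t1 t2 s t :: real
  assumes D: "s1 * t2 - s2 * t1 \<noteq> 0"
  obtains a1 a2 where "a1 * s1 + a2 * s2 = s" "a1 * t1 + a2 * t2 = t"
proof
  let ?D = "s1 * t2 - s2 * t1"
  have "(s * t2 - s2 * t)/?D * s1 + (s1 * t - s * t1)/?D * s2
      = ((s * t2 - s2 * t) * s1 + (s1 * t - s * t1) * s2)/?D"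
    by (simp add: add_divide_distrib)
  also have "\<dots> = s * ?D / ?D" by (simp add: algebra_simps)
  finally show "(s * t2 - s2 * t)/?D * s1 + (s1 * t - s * t1)/?D * s2 = s" using D by simp
  have "(s * t2 - s2 * t)/?D * t1 + (s1 * t - s * t1)/?D * t2
      = ((s * t2 - s2 * t) * t1 + (s1 * t - s * t1) * t2)/?D"
    by (simp add: add_divide_distrib)
  also have "\<dots> = t * ?D / ?D" by (simp add: algebra_simps)
  finally show "(s * t2 - s2 * t)/?D * t1 + (s1 * t - s * t1)/?D * t2 = t" using D by simp
qed

lemma integral_lincomb3:
  fixes f g h :: "real \<Rightarrow> real"
  assumes "f integrable_on S" "g integrable_on S" "h integrable_on S"
  shows "integral S (\<lambda>x. f x - a1 * g x - a2 * h x)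
    = integral S f - a1 * integral S g - a2 * integral S h"
proof -
  have "integral S (\<lambda>x. f x - a1 * g x - a2 * h x)
      = integral S (\<lambda>x. f x - a1 * g x) - integral S (\<lambda>x. a2 * h x)"
    using assms by (intro integral_diff integrable_diff integrable_cmul)
      (auto intro: integrable_on_mult_right)
  also have "\<dots> = integral S f - integral S (\<lambda>x. a1 * g x) - integral S (\<lambda>x. a2 * h x)"
    using assms by (subst integral_diff) (auto intro: integrable_on_mult_right)
  finally show ?thesis by simp
qed

lemma bump_orthogonal_imp_nonpos:
  fixes v :: "real \<Rightarrow> real"
  assumes vc: "continuous_on {\<alpha>..\<beta>} v"
    and orth: "\<And>p q. \<alpha> < p \<Longrightarrow> p < q \<Longrightarrow> q < \<beta> \<Longrightarrow> integral {\<alpha>..\<beta>} (\<lambda>x. v x * bump p q x) = 0"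
    and x0: "x0 \<in> {\<alpha><..<\<beta>}"
  shows "v x0 \<le> 0"
proof (rule ccontr)
  assume "\<not> v x0 \<le> 0"
  hence pos: "v x0 > 0" by simp
  have "isCont v x0" using continuous_on_interior[OF vc] x0 by auto
  hence "v \<midarrow>x0\<rightarrow> v x0" by (simp add: isCont_def)
  from LIM_fun_gt_zero[OF this pos] obtain r where r: "0 < r"
    and near: "\<And>x. x \<noteq> x0 \<and> \<bar>x0 - x\<bar> < r \<longrightarrow> 0 < v x"
    by blast
  define \<delta> where "\<delta> = min r (min (x0 - \<alpha>) (\<beta> - x0)) / 2"
  have "\<delta> \<le> r/2" "\<delta> \<le> (x0 - \<alpha>)/2" "\<delta> \<le> (\<beta> - x0)/2" "0 < \<delta>"
    unfolding \<delta>_def using r x0 by auto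
  hence \<delta>: "0 < \<delta>" "\<delta> < r" "\<alpha> < x0 - \<delta>" "x0 + \<delta> < \<beta>" using r x0 by auto
  have "0 < integral {\<alpha>..\<beta>} (\<lambda>x. v x * bump (x0-\<delta>) (x0+\<delta>) x)"
  proof (rule integral_pos_of_pos_point)
    show "continuous_on {\<alpha>..\<beta>} (\<lambda>x. v x * bump (x0-\<delta>) (x0+\<delta>) x)"
      by (intro continuous_intros vc continuous_on_bump)
    show "0 \<le> v x * bump (x0-\<delta>) (x0+\<delta>) x" for x
    proof (cases "x \<in> {x0-\<delta><..<x0+\<delta>}")
      case True
      hence "0 < v x" using near[of x] pos \<delta> by (cases "x = x0") auto
      thus ?thesis using bump_nonneg by simp
    next
      case False thus ?thesis using bump_eq_0[of "x0-\<delta>" "x0+\<delta>" x] \<delta> by simp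
    qed
    show "0 < v x0 * bump (x0-\<delta>) (x0+\<delta>) x0" using pos bump_pos[of "x0-\<delta>" x0 "x0+\<delta>"] \<delta> by simp
  qed (use x0 in auto)
  with orth \<delta> show False by simp
qed

lemma continuous_on_eq_closed_interval:
  fixes f g :: "real \<Rightarrow> real"
  assumes "\<alpha> < \<beta>" "continuous_on {\<alpha>..\<beta>} f" "continuous_on {\<alpha>..\<beta>} g"
    and "\<And>x. x \<in> {\<alpha><..<\<beta>} \<Longrightarrow> f x = g x" and "x \<in> {\<alpha>..\<beta>}"
  shows "f x = g x"
proof -
  have c: "closed {x \<in> {\<alpha>..\<beta>}. f x \<le> g x}" "closed {x \<in> {\<alpha>..\<beta>}. g x \<le> f x}"
    by (rule continuous_on_closed_Collect_le; use assms in simp)+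
  have "closure {\<alpha><..<\<beta>} \<subseteq> {x \<in> {\<alpha>..\<beta>}. f x \<le> g x}"
    by (rule closure_minimal[OF _ c(1)]) (use assms in auto)
  moreover have "closure {\<alpha><..<\<beta>} \<subseteq> {x \<in> {\<alpha>..\<beta>}. g x \<le> f x}"
    by (rule closure_minimal[OF _ c(2)]) (use assms in auto)
  ultimately show ?thesis using assms(1,5) by force
qed

lemma bump_orthogonal_imp_zero:
  fixes v :: "real \<Rightarrow> real"
  assumes "\<alpha> < \<beta>" and vc: "continuous_on {\<alpha>..\<beta>} v"
    and orth: "\<And>p q. \<alpha> < p \<Longrightarrow> p < q \<Longrightarrow> q < \<beta> \<Longrightarrow> integral {\<alpha>..\<beta>} (\<lambda>x. v x * bump p q x) = 0"
    and "x \<in> {\<alpha>..\<beta>}"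
  shows "v x = 0"
proof (rule continuous_on_eq_closed_interval[OF assms(1) vc _ _ assms(4)])
  fix y assume y: "y \<in> {\<alpha><..<\<beta>}"
  have "v y \<le> 0" by (rule bump_orthogonal_imp_nonpos[OF vc orth y])
  moreover have "- v y \<le> 0"
    by (rule bump_orthogonal_imp_nonpos[of _ _ "\<lambda>x. - v x", OF _ _ y])
      (use orth in \<open>auto intro: continuous_intros vc\<close>)
  ultimately show "v y = 0" by simp
qed auto

lemma weak_homogeneous_bump_pairing:
  fixes u :: "real \<Rightarrow> real"
  assumes hom: "weak_homogeneous_on a c \<alpha> \<beta> u" and ab: "-a \<le> \<alpha>" "\<beta> \<le> a"
    and u: "continuous_on {\<alpha>..\<beta>} u"
    and pq: "\<alpha> < p" "p < q" "q < \<beta>" "\<alpha> < p1" "p1 < q1" "q1 < \<beta>" "\<alpha> < p2" "p2 < q2" "q2 < \<beta>"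
    and moments:
      "a1 * integral {\<alpha>..\<beta>} (bump p1 q1) + a2 * integral {\<alpha>..\<beta>} (bump p2 q2)
        = integral {\<alpha>..\<beta>} (bump p q)"
      "a1 * integral {\<alpha>..\<beta>} (\<lambda>x. exp_prim c x * bump p1 q1 x)
        + a2 * integral {\<alpha>..\<beta>} (\<lambda>x. exp_prim c x * bump p2 q2 x)
        = integral {\<alpha>..\<beta>} (\<lambda>x. exp_prim c x * bump p q x)"
  shows "integral {\<alpha>..\<beta>} (\<lambda>x. u x * bump p q x)
    = a1 * integral {\<alpha>..\<beta>} (\<lambda>x. u x * bump p1 q1 x) + a2 * integral {\<alpha>..\<beta>} (\<lambda>x. u x * bump p2 q2 x)"
proof -
  define \<psi> where "\<psi> x = bump p q x - a1 * bump p1 q1 x - a2 * bump p2 q2 x" for x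
  have pairing: "integral {\<alpha>..\<beta>} (\<lambda>x. f x * \<psi> x) = integral {\<alpha>..\<beta>} (\<lambda>x. f x * bump p q x)
      - a1 * integral {\<alpha>..\<beta>} (\<lambda>x. f x * bump p1 q1 x) - a2 * integral {\<alpha>..\<beta>} (\<lambda>x. f x * bump p2 q2 x)"
    if "continuous_on {\<alpha>..\<beta>} f" for f
  proof -
    have "(\<lambda>x. f x * \<psi> x)
        = (\<lambda>x. f x * bump p q x - a1 * (f x * bump p1 q1 x) - a2 * (f x * bump p2 q2 x))"
      unfolding \<psi>_def by (simp add: algebra_simps)
    thus ?thesis
      by (simp add: integral_lincomb3 integrable_continuous_real continuous_intros that
          continuous_on_bump)
  qed
  define P Q where "P = min p (min p1 p2)" "Q = max q (max q1 q2)"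
  have "integral {\<alpha>..\<beta>} (\<lambda>x. u x * \<psi> x) = 0"
  proof (rule weak_homogeneous_orthogonal[OF hom ab u])
    show "\<alpha> < P" "P < Q" "Q < \<beta>" unfolding P_Q_def using pq by auto
    show "smooth \<psi>" unfolding \<psi>_def by (intro smooth_diff smooth_cmult smooth_bump)
    show "\<psi> x = 0" if "x \<notin> {P<..<Q}" for x
    proof -
      have "x \<notin> {p<..<q}" "x \<notin> {p1<..<q1}" "x \<notin> {p2<..<q2}" using that unfolding P_Q_def by auto
      thus ?thesis unfolding \<psi>_def using pq by (simp add: bump_eq_0)
    qed
    show "integral {\<alpha>..\<beta>} \<psi> = 0" "integral {\<alpha>..\<beta>} (\<lambda>x. exp_prim c x * \<psi> x) = 0"
      using pairing[of "\<lambda>_. 1"] pairing[OF continuous_on_exp_prim] moments by simp_all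
  qed
  thus ?thesis using pairing[OF u] by simp
qed

lemma weak_homogeneous_imp_kernel:
  fixes u :: "real \<Rightarrow> real"
  assumes hom: "weak_homogeneous_on a c \<alpha> \<beta> u" and ab: "\<alpha> < \<beta>" "-a \<le> \<alpha>" "\<beta> \<le> a"
    and u: "continuous_on {\<alpha>..\<beta>} u"
  obtains A B where "\<And>x. x \<in> {\<alpha>..\<beta>} \<Longrightarrow> u x = A + B * exp_prim c x"
proof -
  define J where "J f = integral {\<alpha>..\<beta>} f" for f :: "real \<Rightarrow> real"
  define e where "e = exp_prim c"
  have ec: "continuous_on {\<alpha>..\<beta>} e" unfolding e_def by (rule continuous_on_exp_prim)
  have int: "(\<lambda>x. f x * bump p q x) integrable_on {\<alpha>..\<beta>}" if "continuous_on {\<alpha>..\<beta>} f" for f p q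
    using that by (intro integrable_continuous_real continuous_intros continuous_on_bump)
  have int1: "bump p q integrable_on {\<alpha>..\<beta>}" for p q
    using int[of "\<lambda>_. 1"] by simp
  define d where "d = (\<beta> - \<alpha>)/5"
  have d: "0 < d" "\<beta> = \<alpha> + 5*d" unfolding d_def using ab by (simp, simp add: field_simps)
  define p1 q1 p2 q2 where "p1 = \<alpha> + d" "q1 = \<alpha> + 2*d" "p2 = \<alpha> + 3*d" "q2 = \<alpha> + 4*d"
  have pq: "\<alpha> < p1" "p1 < q1" "q1 < p2" "p2 < q2" "q2 < \<beta>"
    unfolding p1_q1_p2_q2_def using d by linarith+
  define \<psi>1 \<psi>2 where "\<psi>1 = bump p1 q1" "\<psi>2 = bump p2 q2"
  have D: "J \<psi>1 * J (\<lambda>x. e x * \<psi>2 x) - J \<psi>2 * J (\<lambda>x. e x * \<psi>1 x) > 0"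
    unfolding J_def \<psi>1_\<psi>2_def e_def by (rule bump_moments_independent[OF pq])
  obtain A B where AB1: "A * J \<psi>1 + B * J (\<lambda>x. e x * \<psi>1 x) = J (\<lambda>x. u x * \<psi>1 x)"
    and AB2: "A * J \<psi>2 + B * J (\<lambda>x. e x * \<psi>2 x) = J (\<lambda>x. u x * \<psi>2 x)"
  proof (rule cramer_2x2)
    have "J (\<lambda>x. e x * \<psi>1 x) * J \<psi>2 = J \<psi>2 * J (\<lambda>x. e x * \<psi>1 x)" by (rule mult.commute)
    thus "J \<psi>1 * J (\<lambda>x. e x * \<psi>2 x) - J (\<lambda>x. e x * \<psi>1 x) * J \<psi>2 \<noteq> 0" using D by linarith
  qed
  define v where "v x = u x - A - B * e x" for x
  have vc: "continuous_on {\<alpha>..\<beta>} v" unfolding v_def by (intro continuous_intros u ec)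
  have v_integral: "J (\<lambda>x. v x * bump p q x)
      = J (\<lambda>x. u x * bump p q x) - A * J (bump p q) - B * J (\<lambda>x. e x * bump p q x)" for p q
  proof -
    have "(\<lambda>x. v x * bump p q x) = (\<lambda>x. u x * bump p q x - A * bump p q x - B * (e x * bump p q x))"
      unfolding v_def by (simp add: algebra_simps)
    thus ?thesis unfolding J_def by (simp add: integral_lincomb3 int1 int u ec)
  qed
  have v\<psi>: "J (\<lambda>x. v x * \<psi>1 x) = 0" "J (\<lambda>x. v x * \<psi>2 x) = 0"
    using AB1 AB2 unfolding v_integral \<psi>1_\<psi>2_def by simp_all
  have "J (\<lambda>x. v x * bump p q x) = 0" if pq0: "\<alpha> < p" "p < q" "q < \<beta>" for p q
  proof -
    define \<psi> where "\<psi> = bump p q"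
    obtain a1 a2 where a: "a1 * J \<psi>1 + a2 * J \<psi>2 = J \<psi>"
      "a1 * J (\<lambda>x. e x * \<psi>1 x) + a2 * J (\<lambda>x. e x * \<psi>2 x) = J (\<lambda>x. e x * \<psi> x)"
      using cramer_2x2[OF less_imp_neq[OF D, symmetric]] by blast
    have u\<psi>: "J (\<lambda>x. u x * \<psi> x) = a1 * J (\<lambda>x. u x * \<psi>1 x) + a2 * J (\<lambda>x. u x * \<psi>2 x)"
      unfolding J_def \<psi>_def \<psi>1_\<psi>2_def
      by (rule weak_homogeneous_bump_pairing[OF hom ab(2,3) u pq0 pq(1,2) _ _ pq(4,5)])
        (use a pq in \<open>simp_all add: J_def \<psi>_def \<psi>1_\<psi>2_def e_def\<close>)
    have "J (\<lambda>x. v x * \<psi> x) = J (\<lambda>x. u x * \<psi> x) - A * J \<psi> - B * J (\<lambda>x. e x * \<psi> x)"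
      unfolding \<psi>_def by (rule v_integral)
    also have "\<dots> = a1 * (J (\<lambda>x. u x * \<psi>1 x) - A * J \<psi>1 - B * J (\<lambda>x. e x * \<psi>1 x))
        + a2 * (J (\<lambda>x. u x * \<psi>2 x) - A * J \<psi>2 - B * J (\<lambda>x. e x * \<psi>2 x))"
      unfolding u\<psi> a[symmetric] by (simp add: algebra_simps)
    also have "\<dots> = 0" unfolding AB1[symmetric] AB2[symmetric] by simp
    finally show ?thesis unfolding \<psi>_def .
  qed
  hence "v x = 0" if "x \<in> {\<alpha>..\<beta>}" for x
    using bump_orthogonal_imp_zero[OF ab(1) vc _ that] unfolding J_def by blast
  hence "u x = A + B * exp_prim c x" if "x \<in> {\<alpha>..\<beta>}" for x
    using that unfolding v_def e_def by (simp add: algebra_simps)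
  with that show ?thesis by blast
qed


section \<open>The weak maximum principle\<close>

lemma negative_component:
  fixes u :: "real \<Rightarrow> real"
  assumes u: "continuous_on {s..t} u" and "0 \<le> u s" "0 \<le> u t"
    and x0: "x0 \<in> {s..t}" "u x0 < 0"
  obtains \<alpha> \<beta> where "s \<le> \<alpha>" "\<alpha> < x0" "x0 < \<beta>" "\<beta> \<le> t" "0 \<le> u \<alpha>" "0 \<le> u \<beta>"
    "\<And>x. x \<in> {\<alpha><..<\<beta>} \<Longrightarrow> u x < 0"
proof -
  define S1 where "S1 = {y \<in> {s..x0}. (\<lambda>_. 0) y \<le> u y}"
  define S2 where "S2 = {y \<in> {x0..t}. (\<lambda>_. 0) y \<le> u y}"
  have "closed S1" "closed S2" unfolding S1_def S2_def
    by (rule continuous_on_closed_Collect_le;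
        use x0 in \<open>auto intro: continuous_on_subset[OF u]\<close>)+
  moreover have "s \<in> S1" "t \<in> S2" "bdd_above S1" "bdd_below S2"
    unfolding S1_def S2_def using x0 assms(2,3) by (auto intro: bdd_aboveI[of _ x0] bdd_belowI[of _ x0])
  ultimately have "Sup S1 \<in> S1" "Inf S2 \<in> S2"
    using closed_contains_Sup closed_contains_Inf by blast+
  hence \<alpha>: "s \<le> Sup S1" "Sup S1 \<le> x0" "0 \<le> u (Sup S1)"
    and \<beta>: "Inf S2 \<le> t" "x0 \<le> Inf S2" "0 \<le> u (Inf S2)"
    unfolding S1_def S2_def by auto
  have neg: "u y < 0" if "y \<in> {Sup S1<..<Inf S2}" for y
  proof (rule ccontr)
    assume "\<not> u y < 0"
    hence "y \<in> S1 \<or> y \<in> S2" unfolding S1_def S2_def using that \<alpha> \<beta> by auto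
    thus False using that cSup_upper[OF _ \<open>bdd_above S1\<close>] cInf_lower[OF _ \<open>bdd_below S2\<close>] by force
  qed
  have "Sup S1 \<noteq> x0" "Inf S2 \<noteq> x0" using \<alpha>(3) \<beta>(3) x0(2) by auto
  with that \<alpha> \<beta> neg show ?thesis by force
qed

lemma weak_sol_nonneg:
  fixes u F :: "real \<Rightarrow> real"
  assumes a: "0 < a" and u: "continuous_on {-a..a} u" and bdry: "0 \<le> u (-a)" "0 \<le> u a"
    and F0: "\<And>x. x \<in> {-a..a} \<Longrightarrow> u x < 0 \<Longrightarrow> F x = 0"
    and ws: "weak_sol a c u F" and x: "x \<in> {-a..a}"
  shows "0 \<le> u x"
proof (rule ccontr)
  assume "\<not> 0 \<le> u x"
  hence "u x < 0" by simp
  then obtain \<alpha> \<beta> where \<alpha>: "-a \<le> \<alpha>" "\<alpha> < x" and \<beta>: "x < \<beta>" "\<beta> \<le> a"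
    and ends: "0 \<le> u \<alpha>" "0 \<le> u \<beta>" and neg: "\<And>y. y \<in> {\<alpha><..<\<beta>} \<Longrightarrow> u y < 0"
    using negative_component[OF u bdry x] by blast
  have u': "continuous_on {\<alpha>..\<beta>} u" by (rule continuous_on_subset[OF u]) (use \<alpha> \<beta> in auto)
  have "weak_homogeneous_on a c \<alpha> \<beta> u"
    unfolding weak_homogeneous_on_def
  proof (intro allI impI)
    fix \<phi> P Q
    assume PQ: "\<alpha> < P" "P < Q" "Q < \<beta>" and \<phi>: "test_fun a \<phi>" "\<forall>x. x \<notin> {P..Q} \<longrightarrow> \<phi> x = 0"
    have "F y * \<phi> y = 0" if "y \<in> {-a..a}" for y
      using F0[OF that] neg[of y] \<phi>(2) PQ by (cases "y \<in> {P..Q}") auto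
    hence "integral {-a..a} (\<lambda>x. F x * \<phi> x) = integral {-a..a} (\<lambda>_. 0)"
      by (intro integral_cong) auto
    thus "integral {-a..a} (\<lambda>x. c * u x * deriv \<phi> x - u x * deriv (deriv \<phi>) x) = 0"
      using ws \<phi>(1) unfolding weak_sol_def by simp
  qed
  moreover have "\<alpha> < \<beta>" using \<alpha> \<beta> by simp
  ultimately obtain A B where AB: "\<And>y. y \<in> {\<alpha>..\<beta>} \<Longrightarrow> u y = A + B * exp_prim c y"
    using weak_homogeneous_imp_kernel[OF _ _ \<alpha>(1) \<beta>(2) u'] by blast
  have e: "exp_prim c \<alpha> \<le> exp_prim c x" "exp_prim c x \<le> exp_prim c \<beta>"
    using exp_prim_mono \<alpha> \<beta> by auto
  have u: "u \<alpha> = A + B * exp_prim c \<alpha>" "u x = A + B * exp_prim c x" "u \<beta> = A + B * exp_prim c \<beta>"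
    using AB \<alpha> \<beta> by auto
  show False
  proof (cases "0 \<le> B")
    case True
    hence "B * exp_prim c \<alpha> \<le> B * exp_prim c x" using e by (intro mult_left_mono)
    thus False using u ends \<open>u x < 0\<close> by linarith
  next
    case False
    hence "B * exp_prim c \<beta> \<le> B * exp_prim c x" using e by (intro mult_left_mono_neg) auto
    thus False using u ends \<open>u x < 0\<close> by linarith
  qed
qed


section \<open>Weak solutions are classical\<close>

lemma test_fun_differentiable:
  assumes "test_fun a \<phi>"
  shows "(\<phi> has_real_derivative deriv \<phi> x) (at x)"
    and "(deriv \<phi> has_real_derivative deriv (deriv \<phi>) x) (at x)"
    and "continuous_on S \<phi>" "continuous_on S (deriv \<phi>)" "continuous_on S (deriv (deriv \<phi>))"
proof -
  have d: "(deriv ^^ n) \<phi> differentiable (at x)" for n x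
    using assms unfolding test_fun_def by blast
  have "\<phi> differentiable (at x)" "deriv \<phi> differentiable (at x)" "deriv (deriv \<phi>) differentiable (at x)"
    for x using d[of 0] d[of 1] d[of 2] by (simp_all add: numeral_2_eq_2)
  thus "(\<phi> has_real_derivative deriv \<phi> x) (at x)"
    "(deriv \<phi> has_real_derivative deriv (deriv \<phi>) x) (at x)"
    "continuous_on S \<phi>" "continuous_on S (deriv \<phi>)" "continuous_on S (deriv (deriv \<phi>))"
    by (auto simp: has_real_derivative_deriv
        intro!: continuous_at_imp_continuous_on differentiable_imp_continuous_within)
qed

lemma test_fun_boundary:
  assumes "test_fun a \<phi>" "x = a \<or> x = -a"
  shows "\<phi> x = 0" "deriv \<phi> x = 0"
proof -
  obtain \<epsilon> where \<epsilon>: "\<epsilon> > 0" "\<And>y. a - \<epsilon> \<le> \<bar>y\<bar> \<Longrightarrow> \<phi> y = 0"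
    using assms(1) unfolding test_fun_def by blast
  define S where "S = {y. a - \<epsilon> < \<bar>y\<bar>}"
  have "open S" unfolding S_def by (intro open_Collect_less continuous_intros)
  moreover have "x \<in> S" using assms(2) \<epsilon> unfolding S_def by auto
  moreover have "\<phi> y = 0" if "y \<in> S" for y using that \<epsilon> unfolding S_def by simp
  ultimately show "\<phi> x = 0" "deriv \<phi> x = 0"
    using has_field_derivative_transform_within_open[of "\<lambda>_. 0" 0 x S \<phi>]
    by (auto intro: DERIV_imp_deriv)
qed

lemma classical_imp_weak_sol:
  fixes U U' G :: "real \<Rightarrow> real"
  assumes a: "0 < a"
    and UD: "\<And>x. x \<in> {-a..a} \<Longrightarrow> (U has_real_derivative U' x) (at x)"
    and U'D: "\<And>x. x \<in> {-a..a} \<Longrightarrow> (U' has_real_derivative -c * U' x - G x) (at x)"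
    and G: "continuous_on {-a..a} G"
  shows "weak_sol a c U G"
  unfolding weak_sol_def
proof (intro allI impI)
  fix \<phi> assume \<phi>: "test_fun a \<phi>"
  note \<phi>d = test_fun_differentiable[OF \<phi>]
  have Uc: "continuous_on {-a..a} U"
    using UD by (meson DERIV_continuous continuous_at_imp_continuous_on)
  define K where "K x = c * U x * \<phi> x - U x * deriv \<phi> x + U' x * \<phi> x" for x
  have "((\<lambda>x. (c * U x * deriv \<phi> x - U x * deriv (deriv \<phi>) x) - G x * \<phi> x)
      has_integral (K a - K (-a))) {-a..a}"
  proof (rule fundamental_theorem_of_calculus_real)
    fix x assume "x \<in> {-a..a}"
    thus "(K has_real_derivative (c * U x * deriv \<phi> x - U x * deriv (deriv \<phi>) x) - G x * \<phi> x) (at x)"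
      unfolding K_def
      by (auto intro!: derivative_eq_intros UD U'D \<phi>d(1,2) simp: algebra_simps)
  qed (use a in auto)
  moreover have "K a = 0" "K (-a) = 0" unfolding K_def using test_fun_boundary[OF \<phi>] by auto
  ultimately have "integral {-a..a} (\<lambda>x. (c * U x * deriv \<phi> x - U x * deriv (deriv \<phi>) x) - G x * \<phi> x) = 0"
    by (simp add: integral_unique)
  thus "integral {-a..a} (\<lambda>x. c * U x * deriv \<phi> x - U x * deriv (deriv \<phi>) x)
      = integral {-a..a} (\<lambda>x. G x * \<phi> x)"
    by (subst (asm) integral_diff)
      (auto intro!: integrable_continuous_real continuous_intros Uc G \<phi>d(3-5))
qed

text \<open>Variation of constants: \<open>U' = exp (-c x) V\<close> with \<open>V' = - exp (c x) G\<close>.\<close>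
lemma exists_classical_solution:
  fixes G :: "real \<Rightarrow> real"
  assumes G: "continuous_on UNIV G"
  obtains U U' where "\<And>x. x \<in> {L<..<R} \<Longrightarrow> (U has_real_derivative U' x) (at x)"
    "\<And>x. x \<in> {L<..<R} \<Longrightarrow> (U' has_real_derivative -c * U' x - G x) (at x)"
proof
  define V where "V t = -integral {L-1..t} (\<lambda>y. exp (c*y) * G y)" for t
  have VD: "(V has_real_derivative -(exp (c*t) * G t)) (at t)" if "t \<in> {L-1<..<R+1}" for t
    unfolding V_def
    by (intro DERIV_minus integral_has_real_derivative_interior[of _ "R+1"])
      (use that in \<open>auto intro!: continuous_intros continuous_on_subset[OF G]\<close>)
  have Vc: "continuous_on {L..R} V"
    by (rule continuous_at_imp_continuous_on) (use VD DERIV_isCont in force)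
  define U' where "U' x = exp (-c*x) * V x" for x
  show "((\<lambda>x. integral {L..x} U') has_real_derivative U' x) (at x)" if "x \<in> {L<..<R}" for x
    unfolding U'_def
    by (rule integral_has_real_derivative_interior[of _ R]) (use that in \<open>auto intro!: continuous_intros Vc\<close>)
  show "(U' has_real_derivative -c * U' x - G x) (at x)" if "x \<in> {L<..<R}" for x
  proof -
    have "(U' has_real_derivative -c * exp (-c*x) * V x + exp (-c*x) * (-(exp (c*x) * G x))) (at x)"
      unfolding U'_def using VD[of x] that by (auto intro!: derivative_eq_intros)
    moreover have "-c * exp (-c*x) * V x + exp (-c*x) * (-(exp (c*x) * G x)) = -c * U' x - G x"
    proof -
      have "exp (-c*x) * (-(exp (c*x) * G x)) = -((exp (-c*x) * exp (c*x)) * G x)"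
        by (simp add: mult_ac)
      also have "\<dots> = - G x" by (simp add: exp_minus)
      finally show ?thesis unfolding U'_def by simp
    qed
    ultimately show ?thesis by simp
  qed
qed

lemma weak_sol_diff_homogeneous:
  fixes u U F G :: "real \<Rightarrow> real"
  assumes u: "weak_sol a c u F" "continuous_on {-a..a} u"
    and U: "weak_sol a c U G" "continuous_on {-a..a} U"
    and FG: "\<And>x. x \<in> {-a..a} \<Longrightarrow> F x = G x"
  shows "weak_homogeneous_on a c (-a) a (\<lambda>x. u x - U x)"
  unfolding weak_homogeneous_on_def
proof (intro allI impI)
  fix \<phi> :: "real \<Rightarrow> real" and P Q
  assume \<phi>: "test_fun a \<phi>"
  note \<phi>d = test_fun_differentiable[OF \<phi>]
  have "integral {-a..a} (\<lambda>x. c * (u x - U x) * deriv \<phi> x - (u x - U x) * deriv (deriv \<phi>) x)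
      = integral {-a..a} (\<lambda>x. c * u x * deriv \<phi> x - u x * deriv (deriv \<phi>) x)
        - integral {-a..a} (\<lambda>x. c * U x * deriv \<phi> x - U x * deriv (deriv \<phi>) x)"
    by (subst integral_diff[symmetric])
      (auto simp: algebra_simps intro!: integrable_continuous_real continuous_intros u U \<phi>d(4,5))
  also have "\<dots> = integral {-a..a} (\<lambda>x. F x * \<phi> x) - integral {-a..a} (\<lambda>x. G x * \<phi> x)"
    using u(1) U(1) \<phi> unfolding weak_sol_def by simp
  also have "integral {-a..a} (\<lambda>x. F x * \<phi> x) = integral {-a..a} (\<lambda>x. G x * \<phi> x)"
    using FG by (intro integral_cong) auto
  finally show "integral {-a..a} (\<lambda>x. c * (u x - U x) * deriv \<phi> x
      - (u x - U x) * deriv (deriv \<phi>) x) = 0"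
    by simp
qed

lemma weak_sol_imp_classical:
  fixes u F G :: "real \<Rightarrow> real"
  assumes a: "0 < a" and u: "continuous_on {-a..a} u" and G: "continuous_on {-a..a} G"
    and ws: "weak_sol a c u F" and FG: "\<And>x. x \<in> {-a..a} \<Longrightarrow> F x = G x"
  obtains W W' where "\<And>x. x \<in> {-a..a} \<Longrightarrow> W x = u x"
    "\<And>x. x \<in> {-a..a} \<Longrightarrow> (W has_real_derivative W' x) (at x)"
    "\<And>x. x \<in> {-a..a} \<Longrightarrow> (W' has_real_derivative -c * W' x - G x) (at x)"
proof -
  define Ge where "Ge = ext_cont G (-a) a"
  have Ge: "continuous_on UNIV Ge" "\<And>x. x \<in> {-a..a} \<Longrightarrow> Ge x = G x"
    unfolding Ge_def using G by (auto intro: continuous_on_ext_cont)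
  obtain U U' where UD: "\<And>x. x \<in> {-a-1<..<a+1} \<Longrightarrow> (U has_real_derivative U' x) (at x)"
    and U'D: "\<And>x. x \<in> {-a-1<..<a+1} \<Longrightarrow> (U' has_real_derivative -c * U' x - Ge x) (at x)"
    using exists_classical_solution[OF Ge(1)] by metis
  have Uc: "continuous_on {-a..a} U"
    by (rule continuous_at_imp_continuous_on) (use UD DERIV_isCont in force)
  have "weak_sol a c U Ge"
    by (rule classical_imp_weak_sol[OF a, where U'=U']) (use UD U'D continuous_on_subset[OF Ge(1)] in auto)
  hence "weak_homogeneous_on a c (-a) a (\<lambda>x. u x - U x)"
    by (rule weak_sol_diff_homogeneous[OF ws u _ Uc]) (simp add: FG Ge(2))
  moreover have "continuous_on {-a..a} (\<lambda>x. u x - U x)" by (intro continuous_intros u Uc)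
  moreover have "-a < a" using a by simp
  ultimately obtain A B where AB: "\<And>x. x \<in> {-a..a} \<Longrightarrow> u x - U x = A + B * exp_prim c x"
    using weak_homogeneous_imp_kernel[of a c "-a" a] by blast
  show ?thesis
  proof (rule that)
    fix x assume x: "x \<in> {-a..a}"
    show "U x + A + B * exp_prim c x = u x" using AB[OF x] by simp
    have "x \<in> {-a-1<..<a+1}" using x by auto
    thus "((\<lambda>x. U x + A + B * exp_prim c x) has_real_derivative U' x + B * exp (-c*x)) (at x)"
      using UD exp_prim_has_derivative[of c x] by (auto intro!: derivative_eq_intros)
    have "((\<lambda>x. U' x + B * exp (-c*x)) has_real_derivative
        (-c * U' x - G x) + B * (exp (-c*x) * (-c))) (at x)"
      using U'D[OF \<open>x \<in> {-a-1<..<a+1}\<close>] Ge(2)[OF x] by (auto intro!: derivative_eq_intros)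
    thus "((\<lambda>x. U' x + B * exp (-c*x)) has_real_derivative -c * (U' x + B * exp (-c*x)) - G x) (at x)"
      by (simp add: algebra_simps)
  qed
qed

section \<open>Strict positivity\<close>

lemma neg_second_derivative_not_local_min:
  fixes f f' f'' :: "real \<Rightarrow> real"
  assumes d: "0 < d"
    and D1: "\<And>y. y \<in> {x0-d<..<x0+d} \<Longrightarrow> (f has_real_derivative f' y) (at y)"
    and D2: "\<And>y. y \<in> {x0-d<..<x0+d} \<Longrightarrow> (f' has_real_derivative f'' y) (at y)"
    and cont: "isCont f'' x0" and crit: "f' x0 = 0" and neg: "f'' x0 < 0"
  obtains y where "y \<in> {x0-d<..<x0+d}" "f y < f x0"
proof -
  have "(\<lambda>y. - f'' y) \<midarrow>x0\<rightarrow> - f'' x0" using cont by (simp add: isCont_def tendsto_minus)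
  from LIM_fun_gt_zero[OF this] neg obtain r where r: "0 < r"
    and near: "\<And>y. y \<noteq> x0 \<and> \<bar>x0 - y\<bar> < r \<longrightarrow> 0 < - f'' y"
    by auto
  define \<delta> where "\<delta> = min r d / 2"
  have \<delta>: "0 < \<delta>" "\<delta> < r" "\<delta> < d" unfolding \<delta>_def using r d by auto
  obtain \<xi> where \<xi>: "x0 < \<xi>" "\<xi> < x0 + \<delta>" "f (x0 + \<delta>) - f x0 = (x0 + \<delta> - x0) * f' \<xi>"
    using MVT2[of x0 "x0 + \<delta>" f f'] D1 \<delta> by auto
  obtain \<eta> where \<eta>: "x0 < \<eta>" "\<eta> < \<xi>" "f' \<xi> - f' x0 = (\<xi> - x0) * f'' \<eta>"
    using MVT2[of x0 \<xi> f' f''] D2 \<delta> \<xi> by auto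
  have "f'' \<eta> < 0" using near[of \<eta>] \<eta> \<xi> \<delta> by auto
  hence "f' \<xi> < 0" using \<eta> crit by (simp add: mult_pos_neg)
  hence "\<delta> * f' \<xi> < 0" using \<delta>(1) by (simp add: mult_pos_neg)
  hence "f (x0 + \<delta>) < f x0" using \<xi> by simp
  thus ?thesis by (intro that[of "x0 + \<delta>"]) (use \<delta> in auto)
qed

lemma nonneg_solution_zero:
  fixes W W' G :: "real \<Rightarrow> real"
  assumes d: "0 < d"
    and WD: "\<And>y. y \<in> {x0-d<..<x0+d} \<Longrightarrow> (W has_real_derivative W' y) (at y)"
    and W'D: "\<And>y. y \<in> {x0-d<..<x0+d} \<Longrightarrow> (W' has_real_derivative -c * W' y - G y) (at y)"
    and G: "isCont G x0" and nonneg: "\<And>y. y \<in> {x0-d<..<x0+d} \<Longrightarrow> 0 \<le> W y"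
    and zero: "W x0 = 0"
  shows "W' x0 = 0" "G x0 \<le> 0"
proof -
  have x0: "x0 \<in> {x0-d<..<x0+d}" using d by simp
  have "\<forall>y. \<bar>x0 - y\<bar> < d \<longrightarrow> W x0 \<le> W y"
  proof (intro allI impI)
    fix y assume "\<bar>x0 - y\<bar> < d"
    hence "y \<in> {x0-d<..<x0+d}" by (simp add: abs_less_iff)
    thus "W x0 \<le> W y" using nonneg zero by simp
  qed
  thus crit: "W' x0 = 0" by (rule DERIV_local_min[OF WD[OF x0] d])
  show "G x0 \<le> 0"
  proof (rule ccontr)
    assume "\<not> G x0 \<le> 0"
    hence neg: "-c * W' x0 - G x0 < 0" using crit by simp
    have cont: "isCont (\<lambda>y. -c * W' y - G y) x0"
      using DERIV_isCont[OF W'D[OF x0]] G by (intro continuous_intros)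
    obtain y where "y \<in> {x0-d<..<x0+d}" "W y < W x0"
      by (rule neg_second_derivative_not_local_min[OF d WD W'D cont crit neg])
    with nonneg zero show False by fastforce
  qed
qed

lemma abs_linear_comb_le:
  fixes x z \<alpha> \<beta> C :: real
  assumes "\<bar>\<alpha>\<bar> \<le> C" "\<bar>\<beta>\<bar> \<le> C"
  shows "\<bar>x * \<alpha> + \<beta> * z\<bar> \<le> C * \<bar>x\<bar> + C * \<bar>z\<bar>"
proof -
  have "\<bar>x * \<alpha> + \<beta> * z\<bar> \<le> \<bar>x\<bar> * \<bar>\<alpha>\<bar> + \<bar>\<beta>\<bar> * \<bar>z\<bar>" by (metis abs_mult abs_triangle_ineq)
  also have "\<dots> \<le> \<bar>x\<bar> * C + C * \<bar>z\<bar>"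
    using assms by (intro add_mono mult_left_mono mult_right_mono) auto
  finally show ?thesis by (simp add: mult.commute)
qed

lemma reaction_linear_bound:
  assumes "0 \<le> \<mu>" "0 < K" "0 \<le> r" and wm: "\<bar>w\<bar> \<le> B" "\<bar>m\<bar> \<le> B"
  defines "C \<equiv> 1 + \<mu> + 2*B + r * (1 + 2*B/K)"
  shows "\<bar>fw \<mu> w m\<bar> \<le> C * \<bar>w\<bar> + C * \<bar>m\<bar>" and "\<bar>fm r K \<mu> w m\<bar> \<le> C * \<bar>w\<bar> + C * \<bar>m\<bar>"
proof -
  have B: "0 \<le> B" using wm by simp
  have rB: "0 \<le> r * (1 + 2*B/K)" using assms B by simp
  have "\<bar>1 - w - m - \<mu>\<bar> \<le> 1 + \<mu> + 2*B" using wm assms(1) by (simp add: abs_le_iff)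
  hence "\<bar>1 - w - m - \<mu>\<bar> \<le> C" unfolding C_def using rB by linarith
  moreover have "\<bar>\<mu>\<bar> \<le> C" unfolding C_def using assms B rB by simp
  ultimately have "\<bar>w * (1 - w - m - \<mu>) + \<mu> * m\<bar> \<le> C * \<bar>w\<bar> + C * \<bar>m\<bar>"
    by (rule abs_linear_comb_le)
  thus "\<bar>fw \<mu> w m\<bar> \<le> C * \<bar>w\<bar> + C * \<bar>m\<bar>" unfolding fw_def by (simp add: algebra_simps)
  have "\<bar>(w + m)/K\<bar> \<le> 2*B/K" using wm assms by (simp add: abs_divide divide_right_mono)
  hence "\<bar>1 - (w + m)/K\<bar> \<le> 1 + 2*B/K" by linarith
  hence "\<bar>r * (1 - (w + m)/K)\<bar> \<le> r * (1 + 2*B/K)"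
    using assms by (simp add: abs_mult mult_left_mono)
  hence "\<bar>r * (1 - (w + m)/K) - \<mu>\<bar> \<le> C" unfolding C_def using assms B by linarith
  moreover have "\<bar>\<mu>\<bar> \<le> C" unfolding C_def using assms B rB by simp
  ultimately have "\<bar>m * (r * (1 - (w + m)/K) - \<mu>) + \<mu> * w\<bar> \<le> C * \<bar>m\<bar> + C * \<bar>w\<bar>"
    by (rule abs_linear_comb_le)
  thus "\<bar>fm r K \<mu> w m\<bar> \<le> C * \<bar>w\<bar> + C * \<bar>m\<bar>" unfolding fm_def by (simp add: algebra_simps)
qed

lemma energy_derivative_lower_bound:
  fixes w w1 m m1 gw gm c C :: real
  assumes g1: "\<bar>gw\<bar> \<le> C * \<bar>w\<bar> + C * \<bar>m\<bar>" and g2: "\<bar>gm\<bar> \<le> C * \<bar>w\<bar> + C * \<bar>m\<bar>" and C: "0 \<le> C"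
  shows "-(2*w*w1 + 2*w1*(-c*w1 - gw) + 2*m*m1 + 2*m1*(-c*m1 - gm))
    \<le> (2 + 4*\<bar>c\<bar> + 8*C) * (w^2 + w1^2 + m^2 + m1^2)"
proof -
  have sq: "2 * \<bar>x\<bar> * \<bar>y\<bar> \<le> x^2 + y^2" for x y :: real
    using sum_squares_bound[of "\<bar>x\<bar>" "\<bar>y\<bar>"] by simp
  have Csq: "C * (2 * \<bar>x\<bar> * \<bar>y\<bar>) \<le> C * x^2 + C * y^2" for x y :: real
    using mult_left_mono[OF sq C] by (simp add: distrib_left)
  have prod: "x * y \<le> \<bar>x\<bar> * \<bar>y\<bar>" "-(x * y) \<le> \<bar>x\<bar> * \<bar>y\<bar>" for x y :: real
    by (metis abs_ge_self abs_mult, metis abs_ge_minus_self abs_mult)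
  have g: "2 * \<bar>w1\<bar> * \<bar>gw\<bar> \<le> C * (2 * \<bar>w1\<bar> * \<bar>w\<bar>) + C * (2 * \<bar>w1\<bar> * \<bar>m\<bar>)"
    "2 * \<bar>m1\<bar> * \<bar>gm\<bar> \<le> C * (2 * \<bar>m1\<bar> * \<bar>w\<bar>) + C * (2 * \<bar>m1\<bar> * \<bar>m\<bar>)"
    using mult_left_mono[OF g1, of "2 * \<bar>w1\<bar>"] mult_left_mono[OF g2, of "2 * \<bar>m1\<bar>"]
    by (simp_all add: algebra_simps)
  have cross: "-(2*w*w1) \<le> w^2 + w1^2" "-(2*m*m1) \<le> m^2 + m1^2"
    using sq[of w w1] prod(2)[of w w1] sq[of m m1] prod(2)[of m m1] by simp_all
  have src: "2*w1*gw \<le> 2 * \<bar>w1\<bar> * \<bar>gw\<bar>" "2*m1*gm \<le> 2 * \<bar>m1\<bar> * \<bar>gm\<bar>"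
    using prod(1)[of w1 gw] prod(1)[of m1 gm] by simp_all
  have drift: "c*w1^2 \<le> \<bar>c\<bar>*w1^2" "c*m1^2 \<le> \<bar>c\<bar>*m1^2" by (simp_all add: mult_right_mono)
  have nn: "0 \<le> \<bar>c\<bar>*w^2" "0 \<le> \<bar>c\<bar>*m^2" "0 \<le> C*w^2" "0 \<le> C*w1^2" "0 \<le> C*m^2" "0 \<le> C*m1^2"
    "0 \<le> w^2" "0 \<le> w1^2" "0 \<le> m^2" "0 \<le> m1^2" "0 \<le> \<bar>c\<bar>*w1^2" "0 \<le> \<bar>c\<bar>*m1^2"
    using C by simp_all
  have "-(2*w*w1 + 2*w1*(-c*w1 - gw) + 2*m*m1 + 2*m1*(-c*m1 - gm))
      = -(2*w*w1) + 2*(c*w1^2) + 2*w1*gw - (2*m*m1) + 2*(c*m1^2) + 2*m1*gm"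
    by (simp add: algebra_simps power2_eq_square)
  also have "\<dots> \<le> 2*w^2 + 2*w1^2 + 2*m^2 + 2*m1^2 + 4*(\<bar>c\<bar>*w^2) + 4*(\<bar>c\<bar>*w1^2)
      + 4*(\<bar>c\<bar>*m^2) + 4*(\<bar>c\<bar>*m1^2) + 8*(C*w^2) + 8*(C*w1^2) + 8*(C*m^2) + 8*(C*m1^2)"
    using g Csq[of w1 w] Csq[of w1 m] Csq[of m1 w] Csq[of m1 m] cross src drift nn by linarith
  also have "\<dots> = (2 + 4*\<bar>c\<bar> + 8*C) * (w^2 + w1^2 + m^2 + m1^2)"
    by (simp add: algebra_simps)
  finally show ?thesis .
qed

text \<open>Uniqueness for the initial value problem at \<open>t\<close>, by a Gronwall argument on the energy
  \<open>W\<^sup>2 + W'\<^sup>2 + M\<^sup>2 + M'\<^sup>2\<close>.\<close>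
lemma zero_state_propagates_backward:
  fixes W W' M M' Gw Gm :: "real \<Rightarrow> real"
  assumes st: "s \<le> t" and C: "0 \<le> C"
    and WD: "\<And>y. y \<in> {s..t} \<Longrightarrow> (W has_real_derivative W' y) (at y)"
    and W'D: "\<And>y. y \<in> {s..t} \<Longrightarrow> (W' has_real_derivative -c * W' y - Gw y) (at y)"
    and MD: "\<And>y. y \<in> {s..t} \<Longrightarrow> (M has_real_derivative M' y) (at y)"
    and M'D: "\<And>y. y \<in> {s..t} \<Longrightarrow> (M' has_real_derivative -c * M' y - Gm y) (at y)"
    and Gw: "\<And>y. y \<in> {s..t} \<Longrightarrow> \<bar>Gw y\<bar> \<le> C * \<bar>W y\<bar> + C * \<bar>M y\<bar>"
    and Gm: "\<And>y. y \<in> {s..t} \<Longrightarrow> \<bar>Gm y\<bar> \<le> C * \<bar>W y\<bar> + C * \<bar>M y\<bar>"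
    and zero: "W t = 0" "W' t = 0" "M t = 0" "M' t = 0"
  shows "W s = 0"
proof -
  define L where "L = 2 + 4*\<bar>c\<bar> + 8*C"
  define E where "E y = W y^2 + W' y^2 + M y^2 + M' y^2" for y
  define E' where "E' y = 2*W y*W' y + 2*W' y*(-c*W' y - Gw y) + 2*M y*M' y + 2*M' y*(-c*M' y - Gm y)"
    for y
  have ED: "(E has_real_derivative E' y) (at y)" if "y \<in> {s..t}" for y
    unfolding E_def E'_def using WD[OF that] W'D[OF that] MD[OF that] M'D[OF that]
    by (auto intro!: derivative_eq_intros simp: power2_eq_square algebra_simps)
  define g where "g y = exp (L*y) * E y" for y
  have "g s \<le> g t"
  proof (rule DERIV_nonneg_imp_nondecreasing[OF st])
    fix y assume "s \<le> y" "y \<le> t"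
    hence y: "y \<in> {s..t}" by simp
    have "(g has_real_derivative L * exp (L*y) * E y + exp (L*y) * E' y) (at y)"
      unfolding g_def using ED[OF y] by (auto intro!: derivative_eq_intros)
    moreover have "- E' y \<le> L * E y" unfolding E'_def E_def L_def
      by (rule energy_derivative_lower_bound[OF Gw[OF y] Gm[OF y] C])
    hence "0 \<le> exp (L*y) * (L * E y + E' y)" by simp
    hence "0 \<le> L * exp (L*y) * E y + exp (L*y) * E' y" by (simp add: algebra_simps)
    ultimately show "\<exists>D. (g has_real_derivative D) (at y) \<and> 0 \<le> D" by blast
  qed
  moreover have "g t = 0" unfolding g_def E_def using zero by simp
  ultimately have "exp (L * s) * E s \<le> 0" unfolding g_def by simp
  hence "E s \<le> 0" by (simp add: mult_le_0_iff)
  moreover have "W s^2 \<le> E s" unfolding E_def by simp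
  ultimately have "W s^2 \<le> 0" by linarith
  thus "W s = 0" by (simp add: power2_less_eq_zero_iff)
qed


lemma continuous_on_bounded_abs:
  fixes f :: "real \<Rightarrow> real"
  assumes "continuous_on {s..t} f"
  obtains B where "\<And>y. y \<in> {s..t} \<Longrightarrow> \<bar>f y\<bar> \<le> B"
proof -
  have "bounded (f ` {s..t})" by (rule compact_imp_bounded[OF compact_continuous_image[OF assms compact_Icc]])
  then obtain B where "\<forall>z\<in>f ` {s..t}. norm z \<le> B" unfolding bounded_iff by blast
  thus ?thesis by (intro that[of B]) auto
qed

lemma classical_solution_common_zero:
  fixes W W' M M' :: "real \<Rightarrow> real"
  assumes par: "0 < \<mu>" "0 < K"
    and WD: "\<And>x. x \<in> {-a..a} \<Longrightarrow> (W has_real_derivative W' x) (at x)"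
    and W'D: "\<And>x. x \<in> {-a..a} \<Longrightarrow> (W' has_real_derivative -c * W' x - fw \<mu> (W x) (M x)) (at x)"
    and MD: "\<And>x. x \<in> {-a..a} \<Longrightarrow> (M has_real_derivative M' x) (at x)"
    and M'D: "\<And>x. x \<in> {-a..a} \<Longrightarrow> (M' has_real_derivative -c * M' x - fm r K \<mu> (W x) (M x)) (at x)"
    and nonneg: "\<And>x. x \<in> {-a..a} \<Longrightarrow> 0 \<le> W x \<and> 0 \<le> M x"
    and x0: "x0 \<in> {-a<..<a}" and not_pos: "\<not> (0 < W x0 \<and> 0 < M x0)"
  shows "W x0 = 0 \<and> W' x0 = 0 \<and> M x0 = 0 \<and> M' x0 = 0"
proof -
  define d where "d = min (x0 + a) (a - x0)"
  have d: "0 < d" unfolding d_def using x0 by simp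
  have near: "y \<in> {-a..a}" if "y \<in> {x0-d<..<x0+d}" for y using that unfolding d_def by auto
  have "isCont W x0" "isCont M x0"
    using DERIV_isCont[OF WD] DERIV_isCont[OF MD] x0 by auto
  hence Gcont: "isCont (\<lambda>y. fw \<mu> (W y) (M y)) x0" "isCont (\<lambda>y. fm r K \<mu> (W y) (M y)) x0"
    unfolding fw_def fm_def using par by (auto intro!: continuous_intros)
  have nn: "0 \<le> W y" "0 \<le> M y" if "y \<in> {x0-d<..<x0+d}" for y using nonneg near that by auto
  have Wzero: "W' x0 = 0" "fw \<mu> (W x0) (M x0) \<le> 0" if "W x0 = 0"
    by (rule nonneg_solution_zero[where W=W and W'=W' and c=c, OF d _ _ Gcont(1) nn(1) that];
        use WD W'D near in blast)+
  have Mzero: "M' x0 = 0" "fm r K \<mu> (W x0) (M x0) \<le> 0" if "M x0 = 0"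
    by (rule nonneg_solution_zero[where W=M and W'=M' and c=c, OF d _ _ Gcont(2) nn(2) that];
        use MD M'D near in blast)+
  have nn0: "0 \<le> W x0" "0 \<le> M x0" using nonneg x0 by auto
  have "W x0 = 0 \<or> M x0 = 0" using not_pos nn0 by auto
  moreover have "M x0 = 0" if "W x0 = 0"
    using Wzero(2)[OF that] that nn0 par(1) by (simp add: fw_def mult_le_0_iff)
  moreover have "W x0 = 0" if "M x0 = 0"
    using Mzero(2)[OF that] that nn0 par(1) by (simp add: fm_def mult_le_0_iff)
  ultimately show ?thesis using Wzero(1) Mzero(1) by blast
qed

lemma classical_solution_positive:
  fixes W W' M M' :: "real \<Rightarrow> real"
  assumes par: "0 < \<mu>" "0 < K" "0 < r"
    and WD: "\<And>x. x \<in> {-a..a} \<Longrightarrow> (W has_real_derivative W' x) (at x)"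
    and W'D: "\<And>x. x \<in> {-a..a} \<Longrightarrow> (W' has_real_derivative -c * W' x - fw \<mu> (W x) (M x)) (at x)"
    and MD: "\<And>x. x \<in> {-a..a} \<Longrightarrow> (M has_real_derivative M' x) (at x)"
    and M'D: "\<And>x. x \<in> {-a..a} \<Longrightarrow> (M' has_real_derivative -c * M' x - fm r K \<mu> (W x) (M x)) (at x)"
    and nonneg: "\<And>x. x \<in> {-a..a} \<Longrightarrow> 0 \<le> W x \<and> 0 \<le> M x"
    and left: "0 < W (-a)" "0 < M (-a)"
    and x0: "x0 \<in> {-a..<a}"
  shows "0 < W x0 \<and> 0 < M x0"
proof (rule ccontr)
  assume not_pos: "\<not> (0 < W x0 \<and> 0 < M x0)"
  have "x0 \<noteq> -a" using left not_pos by auto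
  hence x0': "x0 \<in> {-a<..<a}" using x0 by auto
  have zero: "W x0 = 0" "W' x0 = 0" "M x0 = 0" "M' x0 = 0"
    using classical_solution_common_zero[OF par(1,2) WD W'D MD M'D nonneg x0' not_pos] by auto
  have Wc: "continuous_on {-a..a} W" and Mc: "continuous_on {-a..a} M"
    using WD MD by (meson DERIV_continuous continuous_at_imp_continuous_on)+
  obtain BW where BW: "\<And>y. y \<in> {-a..a} \<Longrightarrow> \<bar>W y\<bar> \<le> BW" using continuous_on_bounded_abs[OF Wc] by blast
  obtain BM where BM: "\<And>y. y \<in> {-a..a} \<Longrightarrow> \<bar>M y\<bar> \<le> BM" using continuous_on_bounded_abs[OF Mc] by blast
  define B where "B = max BW BM"
  define C where "C = 1 + \<mu> + 2*B + r * (1 + 2*B/K)"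
  have "0 \<le> B" unfolding B_def using BW[of "-a"] x0' by force
  hence "0 \<le> C" unfolding C_def using par by simp
  have bound: "\<bar>fw \<mu> (W y) (M y)\<bar> \<le> C * \<bar>W y\<bar> + C * \<bar>M y\<bar>"
      "\<bar>fm r K \<mu> (W y) (M y)\<bar> \<le> C * \<bar>W y\<bar> + C * \<bar>M y\<bar>" if "y \<in> {-a..a}" for y
    using reaction_linear_bound[of \<mu> K r "W y" B "M y"] BW[OF that] BM[OF that] par
    unfolding C_def B_def by auto
  have "W (-a) = 0"
    by (rule zero_state_propagates_backward[where t=x0 and W'=W' and M=M and M'=M' and c=c
          and Gw="\<lambda>y. fw \<mu> (W y) (M y)" and Gm="\<lambda>y. fm r K \<mu> (W y) (M y)", OF _ \<open>0 \<le> C\<close>])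
      (use WD W'D MD M'D bound zero x0' in auto)
  with left show False by simp
qed

lemma Pa_nonneg_classical:
  assumes A: "assumption1 r K \<mu>" and a: "0 < a" and P: "Pa r K \<mu> a c w m"
  obtains W W' M M' where
    "\<And>x. x \<in> {-a..a} \<Longrightarrow> (W has_real_derivative W' x) (at x)"
    "\<And>x. x \<in> {-a..a} \<Longrightarrow> (W' has_real_derivative -c * W' x - fw \<mu> (W x) (M x)) (at x)"
    "\<And>x. x \<in> {-a..a} \<Longrightarrow> (M has_real_derivative M' x) (at x)"
    "\<And>x. x \<in> {-a..a} \<Longrightarrow> (M' has_real_derivative -c * M' x - fm r K \<mu> (W x) (M x)) (at x)"
    "\<And>x. x \<in> {-a..a} \<Longrightarrow> W x = w x \<and> M x = m x"
    "\<And>x. x \<in> {-a..a} \<Longrightarrow> 0 \<le> w x \<and> 0 \<le> m x"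
proof -
  have par: "0 < \<mu>" "0 < K" "0 < r" using A unfolding assumption1_def by auto
  have wc: "continuous_on {-a..a} w" and mc: "continuous_on {-a..a} m"
    and wsw: "weak_sol a c w (\<lambda>x. fw \<mu> (w x) (m x) * chi (w x) (m x))"
    and wsm: "weak_sol a c m (\<lambda>x. fm r K \<mu> (w x) (m x) * chi (w x) (m x))"
    and bdry: "w (-a) = fst (eqpt r K \<mu>)" "m (-a) = snd (eqpt r K \<mu>)" "w a = 0" "m a = 0"
    using P unfolding Pa_def by auto
  have "0 < w (-a)" "0 < m (-a)" using eqpt_mem_box[OF A] bdry by auto
  hence nonneg: "0 \<le> w x \<and> 0 \<le> m x" if "x \<in> {-a..a}" for x
    using weak_sol_nonneg[OF a wc _ _ _ wsw that] weak_sol_nonneg[OF a mc _ _ _ wsm that] bdry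
    by (auto simp: chi_def)
  have Gw: "continuous_on {-a..a} (\<lambda>x. fw \<mu> (w x) (m x))"
    and Gm: "continuous_on {-a..a} (\<lambda>x. fm r K \<mu> (w x) (m x))"
    unfolding fw_def fm_def using wc mc par by (auto intro!: continuous_intros)
  have Fw: "fw \<mu> (w x) (m x) * chi (w x) (m x) = fw \<mu> (w x) (m x)"
    and Fm: "fm r K \<mu> (w x) (m x) * chi (w x) (m x) = fm r K \<mu> (w x) (m x)" if "x \<in> {-a..a}" for x
    using nonneg[OF that] by (simp_all add: chi_def)
  obtain W W' where W: "\<And>x. x \<in> {-a..a} \<Longrightarrow> W x = w x"
    "\<And>x. x \<in> {-a..a} \<Longrightarrow> (W has_real_derivative W' x) (at x)"
    "\<And>x. x \<in> {-a..a} \<Longrightarrow> (W' has_real_derivative -c * W' x - fw \<mu> (w x) (m x)) (at x)"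
    using weak_sol_imp_classical[OF a wc Gw wsw Fw] by blast
  obtain M M' where M: "\<And>x. x \<in> {-a..a} \<Longrightarrow> M x = m x"
    "\<And>x. x \<in> {-a..a} \<Longrightarrow> (M has_real_derivative M' x) (at x)"
    "\<And>x. x \<in> {-a..a} \<Longrightarrow> (M' has_real_derivative -c * M' x - fm r K \<mu> (w x) (m x)) (at x)"
    using weak_sol_imp_classical[OF a mc Gm wsm Fm] by blast
  show ?thesis
    by (rule that[of W W' M M']) (use W M nonneg in auto)
qed

theorem mainTheorem4:
  fixes r K \<mu> a c :: real and w m :: "real \<Rightarrow> real"
  assumes "assumption1 r K \<mu>" and "0 < a" and "Pa r K \<mu> a c w m"
  shows "\<forall>x\<in>{-a..<a}. 0 < w x \<and> 0 < m x"
proof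
  fix x assume x: "x \<in> {-a..<a}"
  have par: "0 < \<mu>" "0 < K" "0 < r" using assms(1) unfolding assumption1_def by auto
  have left: "0 < w (-a)" "0 < m (-a)"
    using eqpt_mem_box[OF assms(1)] assms(3) unfolding Pa_def by auto
  obtain W W' M M' where ode: "\<And>x. x \<in> {-a..a} \<Longrightarrow> (W has_real_derivative W' x) (at x)"
      "\<And>x. x \<in> {-a..a} \<Longrightarrow> (W' has_real_derivative -c * W' x - fw \<mu> (W x) (M x)) (at x)"
      "\<And>x. x \<in> {-a..a} \<Longrightarrow> (M has_real_derivative M' x) (at x)"
      "\<And>x. x \<in> {-a..a} \<Longrightarrow> (M' has_real_derivative -c * M' x - fm r K \<mu> (W x) (M x)) (at x)"
    and WM: "\<And>x. x \<in> {-a..a} \<Longrightarrow> W x = w x \<and> M x = m x"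
    and nonneg: "\<And>x. x \<in> {-a..a} \<Longrightarrow> 0 \<le> w x \<and> 0 \<le> m x"
    by (rule Pa_nonneg_classical[OF assms]) blast
  have "0 < W x \<and> 0 < M x"
    by (rule classical_solution_positive[OF par ode _ _ _ x]) (use WM nonneg left assms(2) in auto)
  thus "0 < w x \<and> 0 < m x" using WM x by auto
qed

end
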